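(* Let $X\in\mathbb{R}^{m\times n}$ be fixed with rows $x^\alpha\in\mathbb{R}^n$, let $W^{\mathrm{pre}},W^{\mathrm{post}}\in\mathbb{R}^{n\times n}$ have i.i.d. $\mathcal N(0,1)$ entries, and define for tokens $\alpha,\beta$ $$\mathcal T_1^{\alpha\beta}=\frac{c\sqrt c}{n\sqrt n}\sum_{i,j=1}^nW^{\mathrm{post}}_{ji}\Big(x^\alpha_i\,\sigma_s\Big(\sum_{j'}x^\beta_{j'}W^{\mathrm{pre}}_{j'j}\Big)+x^\beta_i\,\sigma_s\Big(\sum_{j'}x^\alpha_{j'}W^{\mathrm{pre}}_{j'j}\Big)\Big).$$ Then, with expectation over the weights, $$\mathbb{E}[\mathcal T_1^{\alpha\beta}\mathcal T_1^{\delta\omega}]=V^{\alpha\delta}\sqrt{V^{\beta\beta}V^{\omega\omega}}\,cK_1(\rho^{\beta\omega})+V^{\alpha\omega}\sqrt{V^{\beta\beta}V^{\delta\delta}}\,cK_1(\rho^{\beta\delta})+V^{\beta\delta}\sqrt{V^{\alpha\alpha}V^{\omega\omega}}\,cK_1(\rho^{\alpha\omega})+V^{\beta\omega}\sqrt{V^{\alpha\alpha}V^{\delta\delta}}\,cK_1(\rho^{\alpha\delta})$$ $$=2V^{\alpha\delta}V^{\beta\omega}+2V^{\alpha\omega}V^{\beta\delta}+O(n^{-1}).$$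
   Context: $\sigma_s(x)=s_+\max(x,0)+s_-\min(x,0)$ with $s_\pm=1+c_\pm n^{-1/2}$ for constants $c_\pm\in\mathbb{R}$; $c^{-1}=\mathbb{E}\sigma_s(g)^2$, $g\sim\mathcal N(0,1)$. $V^{\alpha\beta}=\frac cn\langle x^\alpha,x^\beta\rangle$, $\rho^{\alpha\beta}=V^{\alpha\beta}(V^{\alpha\alpha}V^{\beta\beta})^{-1/2}$. $K_1(\rho)=\mathbb{E}[\sigma_s(g)\sigma_s(g')]$ where $(g,g')$ are jointly Gaussian, standard, with correlation $\rho$. $O(n^{-1})$ denotes a term whose magnitude times $n$ is bounded independently of $n$. *)

theory Defs
  imports "HOL-Probability.Probability"
begin

definition sigma_s :: "real \<Rightarrow> real \<Rightarrow> real \<Rightarrow> real" where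
  "sigma_s sp sm x = sp * max x 0 + sm * min x 0"

definition s_par :: "nat \<Rightarrow> real \<Rightarrow> real" where
  "s_par n cc = 1 + cc / sqrt (real n)"

definition gauss :: "real measure" where
  "gauss = density lborel std_normal_density"

definition c_const :: "real \<Rightarrow> real \<Rightarrow> real" where
  "c_const sp sm = 1 / (\<integral>g. (sigma_s sp sm g)^2 \<partial>gauss)"

text \<open>K_1(rho) = E[sigma_s(g) sigma_s(g')] with (g,g') standard jointly Gaussian of
  correlation rho, realised as g' = rho g + sqrt(1-rho^2) h with g,h i.i.d. N(0,1).\<close>
definition K1 :: "real \<Rightarrow> real \<Rightarrow> real \<Rightarrow> real" where
  "K1 sp sm \<rho> = (\<integral>z. sigma_s sp sm (fst z) * sigma_s sp sm (\<rho> * fst z + sqrt (1 - \<rho>^2) * snd z)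
                      \<partial>(pair_measure gauss gauss))"

text \<open>Tokens are rows X a of the data matrix; indices 0..<n.\<close>
definition Vmat :: "nat \<Rightarrow> real \<Rightarrow> (nat \<Rightarrow> nat \<Rightarrow> real) \<Rightarrow> nat \<Rightarrow> nat \<Rightarrow> real" where
  "Vmat n c X a b = c / real n * (\<Sum>i<n. X a i * X b i)"

definition rhomat :: "nat \<Rightarrow> real \<Rightarrow> (nat \<Rightarrow> nat \<Rightarrow> real) \<Rightarrow> nat \<Rightarrow> nat \<Rightarrow> real" where
  "rhomat n c X a b = Vmat n c X a b / sqrt (Vmat n c X a a * Vmat n c X b b)"

text \<open>Law of an n x n matrix with i.i.d. N(0,1) entries (entry (j,i) = W_{ji}).\<close>
definition Wlaw :: "nat \<Rightarrow> (nat \<times> nat \<Rightarrow> real) measure" where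
  "Wlaw n = PiM ({..<n} \<times> {..<n}) (\<lambda>_. gauss)"

definition T1 :: "nat \<Rightarrow> real \<Rightarrow> real \<Rightarrow> real \<Rightarrow> (nat \<Rightarrow> nat \<Rightarrow> real) \<Rightarrow> nat \<Rightarrow> nat
                  \<Rightarrow> (nat \<times> nat \<Rightarrow> real) \<Rightarrow> (nat \<times> nat \<Rightarrow> real) \<Rightarrow> real" where
  "T1 n sp sm c X a b Wpre Wpost =
     c * sqrt c / (real n * sqrt (real n)) *
     (\<Sum>i<n. \<Sum>j<n. Wpost (j, i) *
        (X a i * sigma_s sp sm (\<Sum>j'<n. X b j' * Wpre (j', j))
         + X b i * sigma_s sp sm (\<Sum>j'<n. X a j' * Wpre (j', j))))"

definition Fterm :: "nat \<Rightarrow> real \<Rightarrow> real \<Rightarrow> real \<Rightarrow> (nat \<Rightarrow> nat \<Rightarrow> real) \<Rightarrow> nat \<Rightarrow> nat \<Rightarrow> nat \<Rightarrow> nat \<Rightarrow> real" where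
  "Fterm n sp sm c X a b d w =
     (let V = Vmat n c X; \<rho> = rhomat n c X in
        V a d * sqrt (V b b * V w w) * c * K1 sp sm (\<rho> b w)
      + V a w * sqrt (V b b * V d d) * c * K1 sp sm (\<rho> b d)
      + V b d * sqrt (V a a * V w w) * c * K1 sp sm (\<rho> a w)
      + V b w * sqrt (V a a * V d d) * c * K1 sp sm (\<rho> a d))"

end

(*
  Given W^pre, T1 is linear in the independent standard Gaussian matrix W^post, and
  E[W^post_r W^post_s] = [r = s]; so E[T1^ab T1^dw] only keeps diagonal terms and reduces to
  E[sigma_s(u^p_j) sigma_s(u^q_j)] for the preactivations u^p_j = sum_j' x^p_j' W^pre_j'j.

  Two linear forms <x, W>, <y, W> of a standard Gaussian vector W have the joint law of
  (alpha g, beta g + gamma h), with (g, h) a standard planar Gaussian and alpha, beta, gamma read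
  off the Gram matrix of x and y.  This is proved by induction on the dimension from the rotation
  invariance of the planar Gaussian, which in turn follows from the invariance of Lebesgue measure
  under shears.  Positive homogeneity of sigma_s then gives E[sigma_s <x,W> sigma_s <y,W>] =
  |x| |y| K1(rho), which is the exact four-term formula.

  For the asymptotics write sigma_s x = A x + B |x| with A = (s_+ + s_-)/2 and
  B = (s_+ - s_-)/2 = O(n^(-1/2)).  By oddness K1(rho) = A^2 rho + B^2 E[|g| |g'|], and
  c = 1 / (A^2 + B^2), so |c K1(rho) - rho| <= 2 B^2 / (A^2 + B^2) = O(1/n); Cauchy-Schwarz
  bounds the remaining factors V by the bound on the diagonal.
*)

theory Submission
  imports Defs
begin

section \<open>The standard Gaussian in the plane\<close>

abbreviation lborel2 :: "(real \<times> real) measure" where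
  "lborel2 \<equiv> lborel \<Otimes>\<^sub>M lborel"

abbreviation gauss2 :: "(real \<times> real) measure" where
  "gauss2 \<equiv> gauss \<Otimes>\<^sub>M gauss"

lemma prob_space_gauss: "prob_space gauss"
  unfolding gauss_def by (rule prob_space_normal_density) simp

interpretation gauss: prob_space gauss
  by (rule prob_space_gauss)

interpretation gauss2: pair_prob_space gauss gauss ..

lemma sets_gauss [simp, measurable_cong]: "sets gauss = sets borel"
  unfolding gauss_def by simp

lemma space_gauss [simp]: "space gauss = UNIV"
  unfolding gauss_def by simp

lemma emeasure_gauss_UNIV [simp]: "emeasure gauss UNIV = 1"
  using gauss.emeasure_space_1 by simp

lemma measure_gauss_UNIV [simp]: "measure gauss UNIV = 1"
  using gauss.prob_space by simp

lemma sets_borel_real_pair [measurable_cong]: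
  "sets (borel :: (real \<times> real) measure) = sets (borel \<Otimes>\<^sub>M borel)"
  by (simp only: borel_prod)

lemma sets_gauss2: "sets gauss2 = sets (borel :: (real \<times> real) measure)"
  using sets_pair_measure_cong[OF sets_gauss sets_gauss] sets_borel_real_pair by simp

lemma nn_integral_lborel2_shear_fst:
  fixes K :: "real \<times> real \<Rightarrow> ennreal"
  assumes [measurable]: "K \<in> borel_measurable borel"
  shows "(\<integral>\<^sup>+z. K (fst z + t * snd z, snd z) \<partial>lborel2) = (\<integral>\<^sup>+z. K z \<partial>lborel2)"
proof -
  have "(\<integral>\<^sup>+z. K (fst z + t * snd z, snd z) \<partial>lborel2) = (\<integral>\<^sup>+y. \<integral>\<^sup>+x. K (x + t * y, y) \<partial>lborel \<partial>lborel)"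
    by (subst lborel_pair.nn_integral_snd[symmetric]) (simp_all add: case_prod_unfold)
  also have "\<dots> = (\<integral>\<^sup>+y. \<integral>\<^sup>+x. K (x, y) \<partial>lborel \<partial>lborel)"
    using nn_integral_real_affine[of "\<lambda>x. K (x, _)" 1 "t * _"] by (simp add: add.commute)
  also have "\<dots> = (\<integral>\<^sup>+z. K z \<partial>lborel2)"
    by (subst lborel_pair.nn_integral_snd[symmetric]) (simp_all add: case_prod_unfold)
  finally show ?thesis .
qed

lemma nn_integral_lborel2_shear_snd:
  fixes K :: "real \<times> real \<Rightarrow> ennreal"
  assumes [measurable]: "K \<in> borel_measurable borel"
  shows "(\<integral>\<^sup>+z. K (fst z, snd z + t * fst z) \<partial>lborel2) = (\<integral>\<^sup>+z. K z \<partial>lborel2)"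
proof -
  have "(\<integral>\<^sup>+z. K (fst z, snd z + t * fst z) \<partial>lborel2) = (\<integral>\<^sup>+x. \<integral>\<^sup>+y. K (x, y + t * x) \<partial>lborel \<partial>lborel)"
    by (subst lborel.nn_integral_fst[symmetric]) (simp_all add: case_prod_unfold)
  also have "\<dots> = (\<integral>\<^sup>+x. \<integral>\<^sup>+y. K (x, y) \<partial>lborel \<partial>lborel)"
    using nn_integral_real_affine[of "\<lambda>y. K (_, y)" 1 "t * _"] by (simp add: add.commute)
  also have "\<dots> = (\<integral>\<^sup>+z. K z \<partial>lborel2)"
    by (subst lborel.nn_integral_fst[symmetric]) (simp_all add: case_prod_unfold)
  finally show ?thesis .
qed

lemma nn_integral_lborel2_reflect_snd:
  fixes K :: "real \<times> real \<Rightarrow> ennreal"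
  assumes [measurable]: "K \<in> borel_measurable borel"
  shows "(\<integral>\<^sup>+z. K (fst z, - snd z) \<partial>lborel2) = (\<integral>\<^sup>+z. K z \<partial>lborel2)"
proof -
  have "(\<integral>\<^sup>+z. K (fst z, - snd z) \<partial>lborel2) = (\<integral>\<^sup>+x. \<integral>\<^sup>+y. K (x, - y) \<partial>lborel \<partial>lborel)"
    by (subst lborel.nn_integral_fst[symmetric]) (simp_all add: case_prod_unfold)
  also have "\<dots> = (\<integral>\<^sup>+x. \<integral>\<^sup>+y. K (x, y) \<partial>lborel \<partial>lborel)"
    using nn_integral_real_affine[of "\<lambda>y. K (_, y)" "-1" 0] by simp
  also have "\<dots> = (\<integral>\<^sup>+z. K z \<partial>lborel2)"
    by (subst lborel.nn_integral_fst[symmetric]) (simp_all add: case_prod_unfold)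
  finally show ?thesis .
qed

text \<open>A rotation other than the half-turn is a product of three shears (Paeth): with
  \<open>t = s / (1 + c)\<close>, first \<open>x \<mapsto> x - t y\<close>, then \<open>y \<mapsto> y + s x\<close>, then again \<open>x \<mapsto> x - t y\<close>.\<close>

lemma nn_integral_lborel2_rotation_not_half_turn:
  fixes K :: "real \<times> real \<Rightarrow> ennreal"
  assumes [measurable]: "K \<in> borel_measurable borel"
    and cs: "c\<^sup>2 + s\<^sup>2 = 1" and "c \<noteq> -1"
  shows "(\<integral>\<^sup>+z. K (c * fst z - s * snd z, s * fst z + c * snd z) \<partial>lborel2) = (\<integral>\<^sup>+z. K z \<partial>lborel2)"
proof -
  define t where "t = s / (1 + c)"
  have "1 + c \<noteq> 0" using \<open>c \<noteq> -1\<close> by (metis add.commute add_eq_0_iff2)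
  then have ts: "t * s = 1 - c"
    unfolding t_def using cs by (simp add: field_simps power2_eq_square)
  then have e1: "1 - t * s = c" and e2: "t * (2 - t * s) = s"
    using \<open>1 + c \<noteq> 0\<close> by (simp_all add: t_def)
  define H\<^sub>1 where "H\<^sub>1 = (\<lambda>z. K (fst z - t * snd z, snd z))"
  define H\<^sub>2 where "H\<^sub>2 = (\<lambda>z. H\<^sub>1 (fst z, snd z + s * fst z))"
  have [measurable]: "H\<^sub>1 \<in> borel_measurable borel"
    unfolding H\<^sub>1_def by measurable
  have [measurable]: "H\<^sub>2 \<in> borel_measurable borel"
    unfolding H\<^sub>2_def by measurable
  have "K (c * fst z - s * snd z, s * fst z + c * snd z) = H\<^sub>2 (fst z - t * snd z, snd z)" for z
  proof -
    have "(fst z - t * snd z) - t * (snd z + s * (fst z - t * snd z))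
        = (1 - t * s) * fst z - t * (2 - t * s) * snd z"
      by (simp add: algebra_simps)
    then have "c * fst z - s * snd z = (fst z - t * snd z) - t * (snd z + s * (fst z - t * snd z))"
      by (simp only: e1 e2)
    moreover have "snd z + s * (fst z - t * snd z) = s * fst z + (1 - t * s) * snd z"
      by (simp add: algebra_simps)
    then have "s * fst z + c * snd z = snd z + s * (fst z - t * snd z)"
      by (simp only: e1)
    ultimately show ?thesis unfolding H\<^sub>2_def H\<^sub>1_def by simp
  qed
  then have "(\<integral>\<^sup>+z. K (c * fst z - s * snd z, s * fst z + c * snd z) \<partial>lborel2)
      = (\<integral>\<^sup>+z. H\<^sub>2 (fst z + (-t) * snd z, snd z) \<partial>lborel2)"
    by simp
  also have "\<dots> = (\<integral>\<^sup>+z. H\<^sub>2 z \<partial>lborel2)" by (rule nn_integral_lborel2_shear_fst) simp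
  also have "\<dots> = (\<integral>\<^sup>+z. H\<^sub>1 z \<partial>lborel2)" unfolding H\<^sub>2_def by (rule nn_integral_lborel2_shear_snd) simp
  also have "\<dots> = (\<integral>\<^sup>+z. K z \<partial>lborel2)" unfolding H\<^sub>1_def using nn_integral_lborel2_shear_fst[of K "-t"] by simp
  finally show ?thesis .
qed

lemma nn_integral_lborel2_rotation:
  fixes K :: "real \<times> real \<Rightarrow> ennreal"
  assumes [measurable]: "K \<in> borel_measurable borel" and cs: "c\<^sup>2 + s\<^sup>2 = 1"
  shows "(\<integral>\<^sup>+z. K (c * fst z - s * snd z, s * fst z + c * snd z) \<partial>lborel2) = (\<integral>\<^sup>+z. K z \<partial>lborel2)"
proof (cases "c = -1")
  case False
  then show ?thesis using nn_integral_lborel2_rotation_not_half_turn[OF assms] by simp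
next
  case True
  \<comment> \<open>the half-turn is the square of the quarter-turn\<close>
  then have "s = 0" using cs by simp
  define K' where "K' = (\<lambda>z. K (- snd z, fst z))"
  have [measurable]: "K' \<in> borel_measurable borel"
    unfolding K'_def by measurable
  have "(\<integral>\<^sup>+z. K' z \<partial>lborel2) = (\<integral>\<^sup>+z. K z \<partial>lborel2)"
    using nn_integral_lborel2_rotation_not_half_turn[OF assms(1), of 0 1] unfolding K'_def by simp
  moreover have "(\<integral>\<^sup>+z. K' (- snd z, fst z) \<partial>lborel2) = (\<integral>\<^sup>+z. K' z \<partial>lborel2)"
    using nn_integral_lborel2_rotation_not_half_turn[of K' 0 1] by simp
  ultimately show ?thesis using True \<open>s = 0\<close> unfolding K'_def by simp
qed

definition gauss2_density :: "real \<times> real \<Rightarrow> ennreal" where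
  "gauss2_density z = ennreal (exp (- ((fst z)\<^sup>2 + (snd z)\<^sup>2) / 2) / (2 * pi))"

lemma gauss2_density_measurable [measurable]: "gauss2_density \<in> borel_measurable borel"
  unfolding gauss2_density_def
  by (intro measurable_compose[OF _ measurable_ennreal] borel_measurable_continuous_onI continuous_intros) auto

lemma std_normal_density_mult:
  "ennreal (std_normal_density x) * ennreal (std_normal_density y) = gauss2_density (x, y)"
proof -
  have "sqrt (2 * pi) * sqrt (2 * pi) = 2 * pi" by simp
  then have "std_normal_density x * std_normal_density y = exp (- (x\<^sup>2 + y\<^sup>2) / 2) / (2 * pi)"
    unfolding std_normal_density_def by (simp add: exp_add[symmetric] field_simps)
  then show ?thesis
    unfolding gauss2_density_def by (simp add: ennreal_mult[symmetric])
qed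

lemma gauss2_eq_density: "gauss2 = density lborel2 gauss2_density"
proof -
  have "gauss2 = density lborel2 (\<lambda>(x, y). ennreal (std_normal_density x) * ennreal (std_normal_density y))"
    unfolding gauss_def
    by (rule pair_measure_density) (auto intro: sigma_finite_lborel gauss.sigma_finite_measure[unfolded gauss_def])
  then show ?thesis by (simp add: std_normal_density_mult case_prod_unfold)
qed

lemma nn_integral_gauss2_invariant:
  fixes H :: "real \<times> real \<Rightarrow> ennreal"
  assumes [measurable]: "H \<in> borel_measurable borel"
    and [measurable]: "T \<in> borel_measurable borel"
    and density: "\<And>z. gauss2_density (T z) = gauss2_density z"
    and lborel_invariant: "\<And>K. K \<in> borel_measurable borel \<Longrightarrow> (\<integral>\<^sup>+z. K (T z) \<partial>lborel2) = (\<integral>\<^sup>+z. K z \<partial>lborel2)"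
  shows "(\<integral>\<^sup>+z. H (T z) \<partial>gauss2) = (\<integral>\<^sup>+z. H z \<partial>gauss2)"
proof -
  have [measurable]: "T \<in> measurable lborel2 borel"
    by (simp add: lborel_prod)
  have "(\<integral>\<^sup>+z. H (T z) \<partial>gauss2) = (\<integral>\<^sup>+z. gauss2_density (T z) * H (T z) \<partial>lborel2)"
    unfolding gauss2_eq_density by (simp add: nn_integral_density density)
  also have "\<dots> = (\<integral>\<^sup>+z. gauss2_density z * H z \<partial>lborel2)"
    by (rule lborel_invariant) measurable
  also have "\<dots> = (\<integral>\<^sup>+z. H z \<partial>gauss2)"
    unfolding gauss2_eq_density by (simp add: nn_integral_density)
  finally show ?thesis .
qed

lemma nn_integral_gauss2_rotation:
  fixes H :: "real \<times> real \<Rightarrow> ennreal"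
  assumes [measurable]: "H \<in> borel_measurable borel" and cs: "c\<^sup>2 + s\<^sup>2 = 1"
  shows "(\<integral>\<^sup>+z. H (c * fst z - s * snd z, s * fst z + c * snd z) \<partial>gauss2) = (\<integral>\<^sup>+z. H z \<partial>gauss2)"
proof (rule nn_integral_gauss2_invariant[where T = "\<lambda>z. (c * fst z - s * snd z, s * fst z + c * snd z)"])
  show "(\<lambda>z. (c * fst z - s * snd z, s * fst z + c * snd z)) \<in> borel_measurable borel"
    by (intro borel_measurable_continuous_onI continuous_intros)
  fix z :: "real \<times> real"
  have "(c * fst z - s * snd z)\<^sup>2 + (s * fst z + c * snd z)\<^sup>2 = (c\<^sup>2 + s\<^sup>2) * ((fst z)\<^sup>2 + (snd z)\<^sup>2)"
    by (simp add: power2_eq_square algebra_simps)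
  then show "gauss2_density (c * fst z - s * snd z, s * fst z + c * snd z) = gauss2_density z"
    using cs by (simp add: gauss2_density_def)
qed (use nn_integral_lborel2_rotation[OF _ cs] in auto)

lemma nn_integral_gauss2_reflect_snd:
  fixes H :: "real \<times> real \<Rightarrow> ennreal"
  assumes [measurable]: "H \<in> borel_measurable borel"
  shows "(\<integral>\<^sup>+z. H (fst z, - snd z) \<partial>gauss2) = (\<integral>\<^sup>+z. H z \<partial>gauss2)"
  by (rule nn_integral_gauss2_invariant[where T = "\<lambda>z. (fst z, - snd z)"])
     (auto simp: gauss2_density_def nn_integral_lborel2_reflect_snd
       intro!: borel_measurable_continuous_onI continuous_intros)

lemma nn_integral_gauss2_uminus:
  fixes H :: "real \<times> real \<Rightarrow> ennreal"
  assumes "H \<in> borel_measurable borel"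
  shows "(\<integral>\<^sup>+z. H (- z) \<partial>gauss2) = (\<integral>\<^sup>+z. H z \<partial>gauss2)"
  using nn_integral_gauss2_rotation[OF assms, of "-1" 0] by (simp add: uminus_prod_def)

lemma integral_gauss2_odd:
  fixes f :: "real \<times> real \<Rightarrow> real"
  assumes [measurable]: "f \<in> borel_measurable borel" and odd: "\<And>z. f (- z) = - f z"
  shows "(\<integral>z. f z \<partial>gauss2) = 0"
proof -
  have "distr gauss2 borel uminus = gauss2"
  proof (rule measure_eqI)
    fix A :: "(real \<times> real) set"
    assume "A \<in> sets (distr gauss2 borel uminus)"
    then have [measurable]: "A \<in> sets borel" by simp
    have "emeasure (distr gauss2 borel uminus) A = (\<integral>\<^sup>+z. indicator A (- z) \<partial>gauss2)"
      using nn_integral_distr[of uminus gauss2 borel "indicator A"] by simp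
    also have "\<dots> = emeasure gauss2 A"
      using nn_integral_gauss2_uminus[of "indicator A"] sets_gauss2 by simp
    finally show "emeasure (distr gauss2 borel uminus) A = emeasure gauss2 A" .
  qed (metis sets_distr sets_gauss2)
  then have "(\<integral>z. f z \<partial>gauss2) = (\<integral>z. f (- z) \<partial>gauss2)"
    using integral_distr[of uminus gauss2 borel f] by simp
  then show ?thesis by (simp add: odd)
qed

section \<open>Pairs of linear forms in a standard Gaussian vector\<close>

lemma nn_integral_gauss2_iterated:
  fixes H :: "real \<times> real \<Rightarrow> ennreal"
  assumes "H \<in> borel_measurable borel"
  shows "(\<integral>\<^sup>+z. H z \<partial>gauss2) = (\<integral>\<^sup>+a. \<integral>\<^sup>+b. H (a, b) \<partial>gauss \<partial>gauss)"
  using gauss.nn_integral_fst[of H gauss] assms by simp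

lemma gram_triangular_exists:
  fixes p q r s :: real
  shows "\<exists>\<alpha> \<beta> \<gamma>. \<alpha> \<ge> 0 \<and> \<gamma> \<ge> 0 \<and> \<alpha>\<^sup>2 = p\<^sup>2 + q\<^sup>2 \<and> \<alpha> * \<beta> = p * r + q * s \<and> \<beta>\<^sup>2 + \<gamma>\<^sup>2 = r\<^sup>2 + s\<^sup>2"
proof -
  define \<alpha> where "\<alpha> = sqrt (p\<^sup>2 + q\<^sup>2)"
  define \<beta> where "\<beta> = (p * r + q * s) / \<alpha>"
  have "(p * r + q * s)\<^sup>2 \<le> (p\<^sup>2 + q\<^sup>2) * (r\<^sup>2 + s\<^sup>2)"
    using zero_le_power2[of "p * s - q * r"] by (simp add: power2_eq_square algebra_simps)
  then have \<beta>: "\<beta>\<^sup>2 \<le> r\<^sup>2 + s\<^sup>2"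
    unfolding \<beta>_def \<alpha>_def power_divide
    by (cases "p\<^sup>2 + q\<^sup>2 = 0") (simp_all add: pos_divide_le_eq add_pos_nonneg less_le mult.commute)
  then have "sqrt (r\<^sup>2 + s\<^sup>2 - \<beta>\<^sup>2) \<ge> 0" "\<beta>\<^sup>2 + (sqrt (r\<^sup>2 + s\<^sup>2 - \<beta>\<^sup>2))\<^sup>2 = r\<^sup>2 + s\<^sup>2"
    by simp_all
  moreover have "\<alpha> * \<beta> = p * r + q * s"
    unfolding \<beta>_def \<alpha>_def by (cases "p\<^sup>2 + q\<^sup>2 = 0") (auto simp: add_nonneg_eq_0_iff)
  moreover have "\<alpha> \<ge> 0" "\<alpha>\<^sup>2 = p\<^sup>2 + q\<^sup>2" unfolding \<alpha>_def by simp_all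
  ultimately show ?thesis by blast
qed

text \<open>The rotation taking \<open>(p, q)\<close> to \<open>(\<alpha>, 0)\<close> takes \<open>(r, s)\<close> to \<open>(\<beta>, \<plusminus>\<gamma>)\<close>;
  a reflection fixes the sign.\<close>

lemma nn_integral_gauss2_triangular_pos:
  fixes F :: "real \<times> real \<Rightarrow> ennreal"
  assumes [measurable]: "F \<in> borel_measurable borel"
    and "\<alpha> > 0" "\<gamma> \<ge> 0" and gram: "\<alpha>\<^sup>2 = p\<^sup>2 + q\<^sup>2" "\<alpha> * \<beta> = p * r + q * s" "\<beta>\<^sup>2 + \<gamma>\<^sup>2 = r\<^sup>2 + s\<^sup>2"
  shows "(\<integral>\<^sup>+z. F (p * fst z + q * snd z, r * fst z + s * snd z) \<partial>gauss2)
       = (\<integral>\<^sup>+z. F (\<alpha> * fst z, \<beta> * fst z + \<gamma> * snd z) \<partial>gauss2)"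
proof -
  define \<delta> where "\<delta> = (p * s - q * r) / \<alpha>"
  have \<delta>: "\<delta>\<^sup>2 = \<gamma>\<^sup>2"
  proof -
    have "\<alpha> * \<delta> = p * s - q * r" using \<open>\<alpha> > 0\<close> by (simp add: \<delta>_def)
    then have "(\<alpha> * \<delta>)\<^sup>2 + (\<alpha> * \<beta>)\<^sup>2 = (p * s - q * r)\<^sup>2 + (p * r + q * s)\<^sup>2"
      by (simp only: gram(2))
    also have "\<dots> = (p\<^sup>2 + q\<^sup>2) * (r\<^sup>2 + s\<^sup>2)"
      by (simp add: power2_eq_square algebra_simps)
    finally have "(\<alpha> * \<delta>)\<^sup>2 + (\<alpha> * \<beta>)\<^sup>2 = (p\<^sup>2 + q\<^sup>2) * (r\<^sup>2 + s\<^sup>2)" .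
    then have "\<alpha>\<^sup>2 * \<delta>\<^sup>2 = \<alpha>\<^sup>2 * \<gamma>\<^sup>2"
      unfolding gram(1)[symmetric] gram(3)[symmetric] by (simp add: power_mult_distrib algebra_simps)
    then show ?thesis using \<open>\<alpha> > 0\<close> by simp
  qed
  have "(p / \<alpha>)\<^sup>2 + (q / \<alpha>)\<^sup>2 = (p\<^sup>2 + q\<^sup>2) / \<alpha>\<^sup>2"
    by (simp add: power_divide add_divide_distrib)
  also have "\<dots> = 1"
    unfolding gram(1)[symmetric] using \<open>\<alpha> > 0\<close> by simp
  finally have rot: "(p / \<alpha>)\<^sup>2 + (q / \<alpha>)\<^sup>2 = 1" .
  have "p * (p / \<alpha> * a - q / \<alpha> * b) + q * (q / \<alpha> * a + p / \<alpha> * b) = (p\<^sup>2 + q\<^sup>2) / \<alpha> * a"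
    and "r * (p / \<alpha> * a - q / \<alpha> * b) + s * (q / \<alpha> * a + p / \<alpha> * b) = (p * r + q * s) / \<alpha> * a + \<delta> * b"
    for a b
    using \<open>\<alpha> > 0\<close> by (simp_all add: \<delta>_def field_simps power2_eq_square)
  then have "p * (p / \<alpha> * a - q / \<alpha> * b) + q * (q / \<alpha> * a + p / \<alpha> * b) = \<alpha> * a"
    and "r * (p / \<alpha> * a - q / \<alpha> * b) + s * (q / \<alpha> * a + p / \<alpha> * b) = \<beta> * a + \<delta> * b"
    for a b
    unfolding gram(1,2)[symmetric] using \<open>\<alpha> > 0\<close> by (simp_all add: power2_eq_square)
  then have "(\<integral>\<^sup>+z. F (p * fst z + q * snd z, r * fst z + s * snd z) \<partial>gauss2)
      = (\<integral>\<^sup>+z. F (\<alpha> * fst z, \<beta> * fst z + \<delta> * snd z) \<partial>gauss2)"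
    using nn_integral_gauss2_rotation[OF _ rot,
        of "\<lambda>z. F (p * fst z + q * snd z, r * fst z + s * snd z)"]
    by simp
  also have "\<dots> = (\<integral>\<^sup>+z. F (\<alpha> * fst z, \<beta> * fst z + \<gamma> * snd z) \<partial>gauss2)"
  proof (cases "\<delta> = \<gamma>")
    case False
    with \<delta> \<open>\<gamma> \<ge> 0\<close> have "\<delta> = - \<gamma>" by (metis power2_eq_iff)
    then show ?thesis
      using nn_integral_gauss2_reflect_snd[of "\<lambda>z. F (\<alpha> * fst z, \<beta> * fst z + \<gamma> * snd z)"]
      by simp
  qed simp
  finally show ?thesis .
qed

lemma nn_integral_gauss2_triangular:
  fixes F :: "real \<times> real \<Rightarrow> ennreal"
  assumes [measurable]: "F \<in> borel_measurable borel"
    and "\<alpha> \<ge> 0" "\<gamma> \<ge> 0" and gram: "\<alpha>\<^sup>2 = p\<^sup>2 + q\<^sup>2" "\<alpha> * \<beta> = p * r + q * s" "\<beta>\<^sup>2 + \<gamma>\<^sup>2 = r\<^sup>2 + s\<^sup>2"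
  shows "(\<integral>\<^sup>+z. F (p * fst z + q * snd z, r * fst z + s * snd z) \<partial>gauss2)
       = (\<integral>\<^sup>+z. F (\<alpha> * fst z, \<beta> * fst z + \<gamma> * snd z) \<partial>gauss2)"
proof (cases "\<alpha> = 0")
  case False
  then show ?thesis using nn_integral_gauss2_triangular_pos[OF assms(1) _ assms(3) gram] \<open>\<alpha> \<ge> 0\<close> by simp
next
  case True
  \<comment> \<open>both sides are laws of multiples of one Gaussian: apply the positive case to the first coordinate\<close>
  then have "p = 0" "q = 0" using gram(1) by (auto simp: add_nonneg_eq_0_iff)
  define \<tau> where "\<tau> = sqrt (r\<^sup>2 + s\<^sup>2)"
  define G where "G = (\<lambda>z :: real \<times> real. F (0, fst z))"
  have G: "G \<in> borel_measurable borel"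
    unfolding G_def by measurable
  have "(\<integral>\<^sup>+z. F (0, u * fst z + v * snd z) \<partial>gauss2) = (\<integral>\<^sup>+z. F (0, \<tau> * fst z) \<partial>gauss2)"
    if "u\<^sup>2 + v\<^sup>2 = r\<^sup>2 + s\<^sup>2" for u v
  proof (cases "\<tau> = 0")
    case True
    then have "u = 0" "v = 0" using that unfolding \<tau>_def by (auto simp: add_nonneg_eq_0_iff)
    then show ?thesis using True by simp
  next
    case False
    then have "\<tau> > 0" unfolding \<tau>_def by (simp add: less_le)
    from nn_integral_gauss2_triangular_pos[of G \<tau> 0 u v 0 0 0, OF G this]
    show ?thesis using that unfolding G_def \<tau>_def by simp
  qed
  from this[of r s] this[of \<beta> \<gamma>] show ?thesis using gram(3) True \<open>p = 0\<close> \<open>q = 0\<close> by simp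
qed

lemma nn_integral_gauss_triangular:
  fixes F :: "real \<times> real \<Rightarrow> ennreal"
  assumes "F \<in> borel_measurable borel"
    and "\<alpha> \<ge> 0" "\<gamma> \<ge> 0" "\<alpha>\<^sup>2 = p\<^sup>2 + q\<^sup>2" "\<alpha> * \<beta> = p * r + q * s" "\<beta>\<^sup>2 + \<gamma>\<^sup>2 = r\<^sup>2 + s\<^sup>2"
  shows "(\<integral>\<^sup>+a. \<integral>\<^sup>+b. F (p * a + q * b, r * a + s * b) \<partial>gauss \<partial>gauss)
       = (\<integral>\<^sup>+a. \<integral>\<^sup>+b. F (\<alpha> * a, \<beta> * a + \<gamma> * b) \<partial>gauss \<partial>gauss)"
proof -
  note [measurable] = assms(1)
  show ?thesis
    using nn_integral_gauss2_triangular[OF assms]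
      nn_integral_gauss2_iterated[of "\<lambda>z. F (p * fst z + q * snd z, r * fst z + s * snd z)"]
      nn_integral_gauss2_iterated[of "\<lambda>z. F (\<alpha> * fst z, \<beta> * fst z + \<gamma> * snd z)"]
    by simp
qed

lemma nn_integral_gauss_triangular_extend:
  fixes F :: "real \<times> real \<Rightarrow> ennreal"
  assumes [measurable]: "F \<in> borel_measurable borel"
    and gram: "\<alpha>' \<ge> 0" "\<gamma>\<^sub>1 \<ge> 0" "\<alpha>'\<^sup>2 = x\<^sup>2 + \<alpha>\<^sup>2" "\<alpha>' * \<beta>' = x * y + \<alpha> * \<beta>" "\<beta>'\<^sup>2 + \<gamma>\<^sub>1\<^sup>2 = y\<^sup>2 + \<beta>\<^sup>2"
  shows "(\<integral>\<^sup>+t. \<integral>\<^sup>+a. \<integral>\<^sup>+b. F (x * t + \<alpha> * a, y * t + \<beta> * a + \<gamma> * b) \<partial>gauss \<partial>gauss \<partial>gauss)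
       = (\<integral>\<^sup>+t. \<integral>\<^sup>+a. F (\<alpha>' * t, \<beta>' * t + sqrt (\<gamma>\<^sup>2 + \<gamma>\<^sub>1\<^sup>2) * a) \<partial>gauss \<partial>gauss)"
proof -
  define \<gamma>' where "\<gamma>' = sqrt (\<gamma>\<^sup>2 + \<gamma>\<^sub>1\<^sup>2)"
  have \<gamma>': "\<gamma>' \<ge> 0" "\<gamma>'\<^sup>2 = \<gamma>\<^sup>2 + \<gamma>\<^sub>1\<^sup>2" unfolding \<gamma>'_def by simp_all
  have "(\<integral>\<^sup>+t. \<integral>\<^sup>+a. \<integral>\<^sup>+b. F (x * t + \<alpha> * a, y * t + \<beta> * a + \<gamma> * b) \<partial>gauss \<partial>gauss \<partial>gauss)
      = (\<integral>\<^sup>+b. \<integral>\<^sup>+t. \<integral>\<^sup>+a. F (x * t + \<alpha> * a, (y * t + \<beta> * a) + \<gamma> * b) \<partial>gauss \<partial>gauss \<partial>gauss)"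
    by (subst gauss2.Fubini'[symmetric], measurable, rule nn_integral_cong, rule gauss2.Fubini') measurable
  also have "\<dots> = (\<integral>\<^sup>+b. \<integral>\<^sup>+t. \<integral>\<^sup>+a. F (\<alpha>' * t, (\<beta>' * t + \<gamma>\<^sub>1 * a) + \<gamma> * b) \<partial>gauss \<partial>gauss \<partial>gauss)"
    using nn_integral_gauss_triangular[of "\<lambda>z. F (fst z, snd z + \<gamma> * _)", OF _ gram] by simp
  also have "\<dots> = (\<integral>\<^sup>+t. \<integral>\<^sup>+b. \<integral>\<^sup>+a. F (\<alpha>' * t, \<beta>' * t + (\<gamma> * b + \<gamma>\<^sub>1 * a)) \<partial>gauss \<partial>gauss \<partial>gauss)"
    by (subst gauss2.Fubini') (simp_all add: ac_simps)
  also have "\<dots> = (\<integral>\<^sup>+t. \<integral>\<^sup>+b. \<integral>\<^sup>+a. F (\<alpha>' * t, \<beta>' * t + (0 * b + \<gamma>' * a)) \<partial>gauss \<partial>gauss \<partial>gauss)"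
    using nn_integral_gauss_triangular[of "\<lambda>z. F (\<alpha>' * _, \<beta>' * _ + snd z)" 0 \<gamma>' 0 0 0 \<gamma> \<gamma>\<^sub>1] \<gamma>'
    by simp
  also have "\<dots> = (\<integral>\<^sup>+t. \<integral>\<^sup>+a. F (\<alpha>' * t, \<beta>' * t + \<gamma>' * a) \<partial>gauss \<partial>gauss)"
    by (simp add: nn_integral_const)
  finally show ?thesis unfolding \<gamma>'_def .
qed

lemma nn_integral_gaussian_linear_forms:
  fixes I :: "'i set" and x y :: "'i \<Rightarrow> real"
  assumes "finite I"
  shows "\<exists>\<alpha> \<beta> \<gamma>. \<alpha> \<ge> 0 \<and> \<gamma> \<ge> 0 \<and> \<alpha>\<^sup>2 = (\<Sum>i\<in>I. (x i)\<^sup>2) \<and> \<alpha> * \<beta> = (\<Sum>i\<in>I. x i * y i)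
     \<and> \<beta>\<^sup>2 + \<gamma>\<^sup>2 = (\<Sum>i\<in>I. (y i)\<^sup>2)
     \<and> (\<forall>F \<in> borel_measurable borel.
          (\<integral>\<^sup>+W. F (\<Sum>i\<in>I. x i * W i, \<Sum>i\<in>I. y i * W i) \<partial>PiM I (\<lambda>_. gauss))
          = (\<integral>\<^sup>+a. \<integral>\<^sup>+b. F (\<alpha> * a, \<beta> * a + \<gamma> * b) \<partial>gauss \<partial>gauss))"
  using assms
proof (induction I rule: finite_induct)
  case empty
  have "prob_space (PiM {} (\<lambda>_::'i. gauss))"
    by (rule prob_space_PiM) (rule prob_space_gauss)
  then show ?case
    by (intro exI[of _ 0]) (simp add: nn_integral_const prob_space.emeasure_space_1)
next
  case (insert i I)
  interpret product_sigma_finite "\<lambda>_::'i. gauss"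
    by (simp add: product_sigma_finite_def gauss.sigma_finite_measure)
  from insert.IH obtain \<alpha> \<beta> \<gamma> where gram: "\<alpha> \<ge> 0" "\<gamma> \<ge> 0" "\<alpha>\<^sup>2 = (\<Sum>i\<in>I. (x i)\<^sup>2)"
      "\<alpha> * \<beta> = (\<Sum>i\<in>I. x i * y i)" "\<beta>\<^sup>2 + \<gamma>\<^sup>2 = (\<Sum>i\<in>I. (y i)\<^sup>2)"
    and IH: "\<And>F. F \<in> borel_measurable borel \<Longrightarrow>
      (\<integral>\<^sup>+W. F (\<Sum>i\<in>I. x i * W i, \<Sum>i\<in>I. y i * W i) \<partial>PiM I (\<lambda>_. gauss))
      = (\<integral>\<^sup>+a. \<integral>\<^sup>+b. F (\<alpha> * a, \<beta> * a + \<gamma> * b) \<partial>gauss \<partial>gauss)"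
    by blast
  obtain \<alpha>' \<beta>' \<gamma>\<^sub>1 where gram': "\<alpha>' \<ge> 0" "\<gamma>\<^sub>1 \<ge> 0"
      "\<alpha>'\<^sup>2 = (x i)\<^sup>2 + \<alpha>\<^sup>2" "\<alpha>' * \<beta>' = x i * y i + \<alpha> * \<beta>" "\<beta>'\<^sup>2 + \<gamma>\<^sub>1\<^sup>2 = (y i)\<^sup>2 + \<beta>\<^sup>2"
    using gram_triangular_exists by blast
  define \<gamma>' where "\<gamma>' = sqrt (\<gamma>\<^sup>2 + \<gamma>\<^sub>1\<^sup>2)"
  have \<gamma>': "\<gamma>' \<ge> 0" "\<gamma>'\<^sup>2 = \<gamma>\<^sup>2 + \<gamma>\<^sub>1\<^sup>2" unfolding \<gamma>'_def by simp_all
  have sum_upd: "(\<Sum>j\<in>insert i I. z j * (W(i := t)) j) = z i * t + (\<Sum>j\<in>I. z j * W j)"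
    for z :: "'i \<Rightarrow> real" and W t
  proof -
    have "(\<Sum>j\<in>I. z j * (W(i := t)) j) = (\<Sum>j\<in>I. z j * W j)"
      by (rule sum.cong) (use insert.hyps in auto)
    then show ?thesis using insert.hyps by simp
  qed
  have "(\<integral>\<^sup>+W. F (\<Sum>j\<in>insert i I. x j * W j, \<Sum>j\<in>insert i I. y j * W j) \<partial>PiM (insert i I) (\<lambda>_. gauss))
      = (\<integral>\<^sup>+t. \<integral>\<^sup>+a. F (\<alpha>' * t, \<beta>' * t + \<gamma>' * a) \<partial>gauss \<partial>gauss)"
    if [measurable]: "F \<in> borel_measurable borel" for F
  proof -
    have "(\<integral>\<^sup>+W. F (\<Sum>j\<in>insert i I. x j * W j, \<Sum>j\<in>insert i I. y j * W j) \<partial>PiM (insert i I) (\<lambda>_. gauss))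
        = (\<integral>\<^sup>+t. \<integral>\<^sup>+W. F (x i * t + (\<Sum>j\<in>I. x j * W j), y i * t + (\<Sum>j\<in>I. y j * W j))
             \<partial>PiM I (\<lambda>_. gauss) \<partial>gauss)"
      using insert.hyps by (subst product_nn_integral_insert_rev) (simp_all add: sum_upd del: fun_upd_apply)
    also have "\<dots> = (\<integral>\<^sup>+t. \<integral>\<^sup>+a. \<integral>\<^sup>+b. F (x i * t + \<alpha> * a, y i * t + \<beta> * a + \<gamma> * b) \<partial>gauss \<partial>gauss \<partial>gauss)"
      using IH[of "\<lambda>z. F (x i * _ + fst z, y i * _ + snd z)"] by (simp add: add.assoc)
    also have "\<dots> = (\<integral>\<^sup>+t. \<integral>\<^sup>+a. F (\<alpha>' * t, \<beta>' * t + \<gamma>' * a) \<partial>gauss \<partial>gauss)"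
      unfolding \<gamma>'_def by (rule nn_integral_gauss_triangular_extend[OF _ gram']) measurable
    finally show ?thesis .
  qed
  moreover have "\<alpha>'\<^sup>2 = (\<Sum>j\<in>insert i I. (x j)\<^sup>2)" "\<alpha>' * \<beta>' = (\<Sum>j\<in>insert i I. x j * y j)"
    "\<beta>'\<^sup>2 + \<gamma>'\<^sup>2 = (\<Sum>j\<in>insert i I. (y j)\<^sup>2)"
    using insert.hyps gram gram' \<gamma>' by (simp_all add: algebra_simps)
  ultimately show ?case using gram'(1) \<gamma>'(1) by blast
qed

lemma distr_gaussian_linear_forms:
  fixes I :: "'i set" and x y :: "'i \<Rightarrow> real"
  assumes "finite I"
  obtains \<alpha> \<beta> \<gamma> where "\<alpha> \<ge> 0" "\<alpha>\<^sup>2 = (\<Sum>i\<in>I. (x i)\<^sup>2)" "\<alpha> * \<beta> = (\<Sum>i\<in>I. x i * y i)"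
    "\<beta>\<^sup>2 + \<gamma>\<^sup>2 = (\<Sum>i\<in>I. (y i)\<^sup>2)" "\<gamma> \<ge> 0"
    and "distr (PiM I (\<lambda>_. gauss)) borel (\<lambda>W. (\<Sum>i\<in>I. x i * W i, \<Sum>i\<in>I. y i * W i))
       = distr gauss2 borel (\<lambda>z. (\<alpha> * fst z, \<beta> * fst z + \<gamma> * snd z))"
proof -
  from nn_integral_gaussian_linear_forms[OF assms, of x y] obtain \<alpha> \<beta> \<gamma> where gram:
      "\<alpha> \<ge> 0" "\<gamma> \<ge> 0" "\<alpha>\<^sup>2 = (\<Sum>i\<in>I. (x i)\<^sup>2)" "\<alpha> * \<beta> = (\<Sum>i\<in>I. x i * y i)"
      "\<beta>\<^sup>2 + \<gamma>\<^sup>2 = (\<Sum>i\<in>I. (y i)\<^sup>2)"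
    and nn: "\<And>F. F \<in> borel_measurable borel \<Longrightarrow>
      (\<integral>\<^sup>+W. F (\<Sum>i\<in>I. x i * W i, \<Sum>i\<in>I. y i * W i) \<partial>PiM I (\<lambda>_. gauss))
      = (\<integral>\<^sup>+a. \<integral>\<^sup>+b. F (\<alpha> * a, \<beta> * a + \<gamma> * b) \<partial>gauss \<partial>gauss)"
    by blast
  have "distr (PiM I (\<lambda>_. gauss)) borel (\<lambda>W. (\<Sum>i\<in>I. x i * W i, \<Sum>i\<in>I. y i * W i))
      = distr gauss2 borel (\<lambda>z. (\<alpha> * fst z, \<beta> * fst z + \<gamma> * snd z))"
  proof (rule measure_eqI)
    fix A :: "(real \<times> real) set"
    assume "A \<in> sets (distr (PiM I (\<lambda>_. gauss)) borel (\<lambda>W. (\<Sum>i\<in>I. x i * W i, \<Sum>i\<in>I. y i * W i)))"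
    then have [measurable]: "A \<in> sets borel" by simp
    have "emeasure (distr (PiM I (\<lambda>_. gauss)) borel (\<lambda>W. (\<Sum>i\<in>I. x i * W i, \<Sum>i\<in>I. y i * W i))) A
        = (\<integral>\<^sup>+W. indicator A (\<Sum>i\<in>I. x i * W i, \<Sum>i\<in>I. y i * W i) \<partial>PiM I (\<lambda>_. gauss))"
      using nn_integral_distr[of "\<lambda>W. (\<Sum>i\<in>I. x i * W i, \<Sum>i\<in>I. y i * W i)" _ borel "indicator A"]
      by simp
    also have "\<dots> = (\<integral>\<^sup>+z. indicator A (\<alpha> * fst z, \<beta> * fst z + \<gamma> * snd z) \<partial>gauss2)"
      using nn[of "indicator A"] nn_integral_gauss2_iterated[of "\<lambda>z. indicator A (\<alpha> * fst z, \<beta> * fst z + \<gamma> * snd z)"]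
      by simp
    also have "\<dots> = emeasure (distr gauss2 borel (\<lambda>z. (\<alpha> * fst z, \<beta> * fst z + \<gamma> * snd z))) A"
      using nn_integral_distr[of "\<lambda>z. (\<alpha> * fst z, \<beta> * fst z + \<gamma> * snd z)" gauss2 borel "indicator A"]
      by simp
    finally show "emeasure (distr (PiM I (\<lambda>_. gauss)) borel (\<lambda>W. (\<Sum>i\<in>I. x i * W i, \<Sum>i\<in>I. y i * W i))) A
        = emeasure (distr gauss2 borel (\<lambda>z. (\<alpha> * fst z, \<beta> * fst z + \<gamma> * snd z))) A" .
  qed simp
  with gram show ?thesis by (intro that) 
qed

section \<open>Second moments\<close>

lemma integral_eq_of_distr_eq:
  fixes f :: "'c \<Rightarrow> real"
  assumes [measurable]: "S \<in> measurable M N" "T \<in> measurable M' N" "f \<in> borel_measurable N"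
    and law: "distr M N S = distr M' N T"
  shows "integrable M (\<lambda>x. f (S x)) \<longleftrightarrow> integrable M' (\<lambda>x. f (T x))"
    and "(\<integral>x. f (S x) \<partial>M) = (\<integral>x. f (T x) \<partial>M')"
proof -
  show "integrable M (\<lambda>x. f (S x)) \<longleftrightarrow> integrable M' (\<lambda>x. f (T x))"
    using integrable_distr_eq[of S M N f] integrable_distr_eq[of T M' N f] law by simp
  show "(\<integral>x. f (S x) \<partial>M) = (\<integral>x. f (T x) \<partial>M')"
    using integral_distr[of S M N f] integral_distr[of T M' N f] law by simp
qed

lemma (in pair_sigma_finite) integrable_mult_fst_snd:
  fixes f :: "'a \<Rightarrow> real" and g :: "'b \<Rightarrow> real"
  assumes "integrable M1 f" "integrable M2 g"
  shows "integrable (M1 \<Otimes>\<^sub>M M2) (\<lambda>z. f (fst z) * g (snd z))"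
proof (rule integrableI_bounded)
  have [measurable]: "f \<in> borel_measurable M1" "g \<in> borel_measurable M2" using assms by simp_all
  show "(\<lambda>z. f (fst z) * g (snd z)) \<in> borel_measurable (M1 \<Otimes>\<^sub>M M2)" by measurable
  have "(\<integral>\<^sup>+z. ennreal (norm (f (fst z) * g (snd z))) \<partial>(M1 \<Otimes>\<^sub>M M2))
      = (\<integral>\<^sup>+x. \<integral>\<^sup>+y. ennreal (norm (f x)) * ennreal (norm (g y)) \<partial>M2 \<partial>M1)"
    by (subst M2.nn_integral_fst[symmetric]) (simp_all add: abs_mult ennreal_mult)
  also have "\<dots> = (\<integral>\<^sup>+x. ennreal (norm (f x)) \<partial>M1) * (\<integral>\<^sup>+y. ennreal (norm (g y)) \<partial>M2)"
    by (simp add: nn_integral_cmult nn_integral_multc)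
  also have "\<dots> < \<infinity>"
    using assms by (simp add: integrable_iff_bounded ennreal_mult_less_top)
  finally show "(\<integral>\<^sup>+z. ennreal (norm (f (fst z) * g (snd z))) \<partial>(M1 \<Otimes>\<^sub>M M2)) < \<infinity>" .
qed

lemma (in pair_sigma_finite) integral_mult_fst_snd:
  fixes f :: "'a \<Rightarrow> real" and g :: "'b \<Rightarrow> real"
  assumes "integrable M1 f" "integrable M2 g"
  shows "(\<integral>z. f (fst z) * g (snd z) \<partial>(M1 \<Otimes>\<^sub>M M2)) = integral\<^sup>L M1 f * integral\<^sup>L M2 g"
  using integral_fst'[OF integrable_mult_fst_snd[OF assms]] by simp

lemma gauss_eq_std_normal_distribution: "gauss = std_normal_distribution"
  unfolding gauss_def ..

lemma integrable_gauss_power: "integrable gauss (\<lambda>x. x ^ k)"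
  unfolding gauss_eq_std_normal_distribution by (rule integrable_std_normal_distribution_moment)

lemma gauss_moments:
  "(\<integral>x. x \<partial>gauss) = 0" "(\<integral>x. x\<^sup>2 \<partial>gauss) = 1"
  using integral_std_normal_distribution_moment_odd[of 1] std_normal_distribution_even_moments(1)[of 1]
  unfolding gauss_eq_std_normal_distribution by simp_all

lemma integrable_gauss2_poly:
  "integrable gauss2 (\<lambda>z. (fst z)\<^sup>2)" "integrable gauss2 (\<lambda>z. (snd z)\<^sup>2)"
  "integrable gauss2 (\<lambda>z. fst z * snd z)" "integrable gauss2 (\<lambda>z. \<bar>fst z\<bar> * \<bar>snd z\<bar>)"
  using gauss2.integrable_mult_fst_snd[of "\<lambda>x. x\<^sup>2" "\<lambda>_. 1"] gauss2.integrable_mult_fst_snd[of "\<lambda>_. 1" "\<lambda>x. x\<^sup>2"]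
    gauss2.integrable_mult_fst_snd[of "\<lambda>x. x" "\<lambda>x. x"] gauss2.integrable_mult_fst_snd[of abs abs]
    integrable_gauss_power[of 1] integrable_gauss_power[of 2]
  by (simp_all add: integrable_abs)

lemma integral_gauss2_bilinear:
  shows "integrable gauss2 (\<lambda>z. (a * fst z + b * snd z) * (c * fst z + d * snd z))"
    and "(\<integral>z. (a * fst z + b * snd z) * (c * fst z + d * snd z) \<partial>gauss2) = a * c + b * d"
proof -
  have *: "(a * fst z + b * snd z) * (c * fst z + d * snd z)
      = a * c * (fst z)\<^sup>2 + (a * d + b * c) * (fst z * snd z) + b * d * (snd z)\<^sup>2" for z :: "real \<times> real"
    by (simp add: power2_eq_square algebra_simps)
  have "(\<integral>z. (fst z)\<^sup>2 \<partial>gauss2) = 1" "(\<integral>z. (snd z)\<^sup>2 \<partial>gauss2) = 1" "(\<integral>z. fst z * snd z \<partial>gauss2) = 0"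
    using gauss2.integral_mult_fst_snd[of "\<lambda>x. x\<^sup>2" "\<lambda>_. 1"] gauss2.integral_mult_fst_snd[of "\<lambda>_. 1" "\<lambda>x. x\<^sup>2"]
      gauss2.integral_mult_fst_snd[of "\<lambda>x. x" "\<lambda>x. x"] integrable_gauss_power[of 1] integrable_gauss_power[of 2]
      gauss_moments
    by simp_all
  then show "(\<integral>z. (a * fst z + b * snd z) * (c * fst z + d * snd z) \<partial>gauss2) = a * c + b * d"
    unfolding * using integrable_gauss2_poly by simp
  show "integrable gauss2 (\<lambda>z. (a * fst z + b * snd z) * (c * fst z + d * snd z))"
    unfolding * using integrable_gauss2_poly by simp
qed

lemma integrable_gauss2_quadratic_bound:
  fixes f :: "real \<times> real \<Rightarrow> real"
  assumes "f \<in> borel_measurable borel" and "\<And>z. \<bar>f z\<bar> \<le> K * (\<bar>fst z\<bar> + \<bar>snd z\<bar>)\<^sup>2"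
  shows "integrable gauss2 f"
proof (rule Bochner_Integration.integrable_bound)
  have "(\<bar>fst z\<bar> + \<bar>snd z\<bar>)\<^sup>2 = (fst z)\<^sup>2 + 2 * (\<bar>fst z\<bar> * \<bar>snd z\<bar>) + (snd z)\<^sup>2" for z :: "real \<times> real"
    by (simp add: power2_eq_square algebra_simps)
  then show "integrable gauss2 (\<lambda>z. K * (\<bar>fst z\<bar> + \<bar>snd z\<bar>)\<^sup>2)"
    using integrable_gauss2_poly by simp
  show "f \<in> borel_measurable gauss2" using assms(1) by measurable
  show "AE z in gauss2. norm (f z) \<le> norm (K * (\<bar>fst z\<bar> + \<bar>snd z\<bar>)\<^sup>2)"
    using assms(2) by (intro AE_I2) (metis abs_ge_self order_trans real_norm_def)
qed

lemma integral_gaussian_linear_forms_mult: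
  fixes I :: "'i set" and x y :: "'i \<Rightarrow> real"
  assumes "finite I"
  shows "integrable (PiM I (\<lambda>_. gauss)) (\<lambda>W. (\<Sum>i\<in>I. x i * W i) * (\<Sum>i\<in>I. y i * W i))"
    and "(\<integral>W. (\<Sum>i\<in>I. x i * W i) * (\<Sum>i\<in>I. y i * W i) \<partial>PiM I (\<lambda>_. gauss)) = (\<Sum>i\<in>I. x i * y i)"
proof -
  obtain \<alpha> \<beta> \<gamma> where gram: "\<alpha> * \<beta> = (\<Sum>i\<in>I. x i * y i)"
    and law: "distr (PiM I (\<lambda>_. gauss)) borel (\<lambda>W. (\<Sum>i\<in>I. x i * W i, \<Sum>i\<in>I. y i * W i))
       = distr gauss2 borel (\<lambda>z. (\<alpha> * fst z, \<beta> * fst z + \<gamma> * snd z))"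
    using distr_gaussian_linear_forms[OF assms, of x y] by blast
  note * = integral_eq_of_distr_eq[OF _ _ _ law, of "\<lambda>z. fst z * snd z", simplified]
  show "integrable (PiM I (\<lambda>_. gauss)) (\<lambda>W. (\<Sum>i\<in>I. x i * W i) * (\<Sum>i\<in>I. y i * W i))"
    using *(1) integral_gauss2_bilinear(1)[of \<alpha> 0 \<beta> \<gamma>] by simp
  show "(\<integral>W. (\<Sum>i\<in>I. x i * W i) * (\<Sum>i\<in>I. y i * W i) \<partial>PiM I (\<lambda>_. gauss)) = (\<Sum>i\<in>I. x i * y i)"
    using *(2) integral_gauss2_bilinear(2)[of \<alpha> 0 \<beta> \<gamma>] gram by simp
qed

lemma integral_gaussian_coordinates_mult:
  fixes I :: "'i set"
  assumes "finite I" "p \<in> I" "q \<in> I"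
  shows "integrable (PiM I (\<lambda>_. gauss)) (\<lambda>W. W p * W q)"
    and "(\<integral>W. W p * W q \<partial>PiM I (\<lambda>_. gauss)) = (if p = q then 1 else 0)"
proof -
  have coord: "(\<Sum>i\<in>I. (if i = r then 1 else 0) * W i) = W r" if "r \<in> I" for r and W :: "'i \<Rightarrow> real"
  proof -
    have "(\<Sum>i\<in>I. (if i = r then 1 else 0) * W i) = (\<Sum>i\<in>I. if i = r then W i else 0)"
      by (rule sum.cong) simp_all
    then show ?thesis using assms(1) that by simp
  qed
  show "integrable (PiM I (\<lambda>_. gauss)) (\<lambda>W. W p * W q)"
    using integral_gaussian_linear_forms_mult(1)[OF assms(1), of "\<lambda>i. if i = p then 1 else 0" "\<lambda>i. if i = q then 1 else 0"]
    by (simp add: coord assms)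
  show "(\<integral>W. W p * W q \<partial>PiM I (\<lambda>_. gauss)) = (if p = q then 1 else 0)"
    using integral_gaussian_linear_forms_mult(2)[OF assms(1), of "\<lambda>i. if i = p then 1 else 0" "\<lambda>i. if i = q then 1 else 0"]
    using assms by (simp add: coord)
qed

section \<open>The activation \<open>sigma_s\<close>\<close>

lemma sigma_s_eq: "sigma_s sp sm x = (sp + sm) / 2 * x + (sp - sm) / 2 * \<bar>x\<bar>"
  unfolding sigma_s_def by (cases "x \<ge> 0") (auto simp: max_def min_def field_simps)

lemma sigma_s_zero [simp]: "sigma_s sp sm 0 = 0"
  unfolding sigma_s_def by simp

lemma sigma_s_mult_nonneg: "t \<ge> 0 \<Longrightarrow> sigma_s sp sm (t * x) = t * sigma_s sp sm x"
  unfolding sigma_s_eq by (simp add: abs_mult algebra_simps)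

lemma abs_sigma_s_le: "\<bar>sigma_s sp sm x\<bar> \<le> (\<bar>sp\<bar> + \<bar>sm\<bar>) * \<bar>x\<bar>"
proof (cases "x \<ge> 0")
  case True
  then have "sigma_s sp sm x = sp * x" unfolding sigma_s_def by simp
  then show ?thesis by (simp add: abs_mult distrib_right)
next
  case False
  then have "sigma_s sp sm x = sm * x" unfolding sigma_s_def by simp
  then show ?thesis by (simp add: abs_mult distrib_right)
qed

lemma sigma_s_measurable [measurable]: "sigma_s sp sm \<in> borel_measurable borel"
  unfolding sigma_s_def by (intro borel_measurable_continuous_onI continuous_intros)

lemma abs_linear_le:
  fixes a b u v :: real
  shows "\<bar>a * u + b * v\<bar> \<le> (\<bar>a\<bar> + \<bar>b\<bar>) * (\<bar>u\<bar> + \<bar>v\<bar>)"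
proof -
  have "\<bar>a * u + b * v\<bar> \<le> \<bar>a\<bar> * \<bar>u\<bar> + \<bar>b\<bar> * \<bar>v\<bar>"
    by (metis abs_mult abs_triangle_ineq)
  also have "\<dots> \<le> (\<bar>a\<bar> + \<bar>b\<bar>) * (\<bar>u\<bar> + \<bar>v\<bar>)"
    by (simp add: algebra_simps)
  finally show ?thesis .
qed

lemma integrable_gauss2_sigma_s:
  "integrable gauss2 (\<lambda>z. sigma_s sp sm (a * fst z + b * snd z) * sigma_s sp sm (c * fst z + d * snd z))"
proof (rule integrable_gauss2_quadratic_bound)
  define L where "L = \<bar>sp\<bar> + \<bar>sm\<bar>"
  fix z :: "real \<times> real"
  define S where "S = \<bar>fst z\<bar> + \<bar>snd z\<bar>"
  have bound: "\<bar>sigma_s sp sm (u * fst z + v * snd z)\<bar> \<le> L * (\<bar>u\<bar> + \<bar>v\<bar>) * S" for u v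
  proof -
    have "\<bar>sigma_s sp sm (u * fst z + v * snd z)\<bar> \<le> L * \<bar>u * fst z + v * snd z\<bar>"
      unfolding L_def by (rule abs_sigma_s_le)
    also have "\<dots> \<le> L * ((\<bar>u\<bar> + \<bar>v\<bar>) * S)"
      unfolding S_def L_def by (intro mult_left_mono abs_linear_le) simp
    finally show ?thesis by (simp add: mult.assoc)
  qed
  have "\<bar>sigma_s sp sm (a * fst z + b * snd z) * sigma_s sp sm (c * fst z + d * snd z)\<bar>
      \<le> (L * (\<bar>a\<bar> + \<bar>b\<bar>) * S) * (L * (\<bar>c\<bar> + \<bar>d\<bar>) * S)"
    unfolding abs_mult by (rule mult_mono[OF bound bound]) (simp_all add: L_def S_def)
  then show "\<bar>sigma_s sp sm (a * fst z + b * snd z) * sigma_s sp sm (c * fst z + d * snd z)\<bar>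
      \<le> (L * (\<bar>a\<bar> + \<bar>b\<bar>) * (L * (\<bar>c\<bar> + \<bar>d\<bar>))) * (\<bar>fst z\<bar> + \<bar>snd z\<bar>)\<^sup>2"
    unfolding S_def by (simp add: power2_eq_square mult_ac)
qed measurable

lemma integral_gauss2_sigma_s_triangular:
  assumes "\<alpha> \<ge> 0" "\<gamma> \<ge> 0"
  shows "(\<integral>z. sigma_s sp sm (\<alpha> * fst z) * sigma_s sp sm (\<beta> * fst z + \<gamma> * snd z) \<partial>gauss2)
       = \<alpha> * sqrt (\<beta>\<^sup>2 + \<gamma>\<^sup>2) * K1 sp sm (\<beta> / sqrt (\<beta>\<^sup>2 + \<gamma>\<^sup>2))"
proof (cases "\<beta>\<^sup>2 + \<gamma>\<^sup>2 = 0")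
  case True
  then have "\<beta> = 0" "\<gamma> = 0" by (auto simp: add_nonneg_eq_0_iff)
  then show ?thesis by simp
next
  case False
  define r where "r = sqrt (\<beta>\<^sup>2 + \<gamma>\<^sup>2)"
  define \<rho> where "\<rho> = \<beta> / r"
  have "r > 0" using False unfolding r_def by (simp add: add_nonneg_nonneg less_le)
  have "sqrt (1 - \<rho>\<^sup>2) = \<gamma> / r"
  proof -
    have r2: "r\<^sup>2 = \<beta>\<^sup>2 + \<gamma>\<^sup>2" unfolding r_def by simp
    have "1 - \<rho>\<^sup>2 = (r\<^sup>2 - \<beta>\<^sup>2) / r\<^sup>2"
      using \<open>r > 0\<close> by (simp add: \<rho>_def power_divide field_simps)
    also have "\<dots> = (\<gamma> / r)\<^sup>2" by (simp add: r2 power_divide)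
    finally show ?thesis using \<open>r > 0\<close> \<open>\<gamma> \<ge> 0\<close> by simp
  qed
  then have "\<beta> * fst z + \<gamma> * snd z = r * (\<rho> * fst z + sqrt (1 - \<rho>\<^sup>2) * snd z)" for z
    using \<open>r > 0\<close> by (simp add: \<rho>_def field_simps)
  then have "(\<integral>z. sigma_s sp sm (\<alpha> * fst z) * sigma_s sp sm (\<beta> * fst z + \<gamma> * snd z) \<partial>gauss2)
      = \<alpha> * r * (\<integral>z. sigma_s sp sm (fst z) * sigma_s sp sm (\<rho> * fst z + sqrt (1 - \<rho>\<^sup>2) * snd z) \<partial>gauss2)"
    using \<open>r > 0\<close> \<open>\<alpha> \<ge> 0\<close> by (simp add: sigma_s_mult_nonneg ac_simps)
  then show ?thesis unfolding K1_def r_def \<rho>_def .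
qed

lemma integral_sigma_s_gaussian_linear_forms:
  fixes I :: "'i set" and x y :: "'i \<Rightarrow> real"
  assumes "finite I"
  shows "integrable (PiM I (\<lambda>_. gauss))
           (\<lambda>W. sigma_s sp sm (\<Sum>i\<in>I. x i * W i) * sigma_s sp sm (\<Sum>i\<in>I. y i * W i))"
    and "(\<integral>W. sigma_s sp sm (\<Sum>i\<in>I. x i * W i) * sigma_s sp sm (\<Sum>i\<in>I. y i * W i) \<partial>PiM I (\<lambda>_. gauss))
        = sqrt (\<Sum>i\<in>I. (x i)\<^sup>2) * sqrt (\<Sum>i\<in>I. (y i)\<^sup>2)
          * K1 sp sm ((\<Sum>i\<in>I. x i * y i) / sqrt ((\<Sum>i\<in>I. (x i)\<^sup>2) * (\<Sum>i\<in>I. (y i)\<^sup>2)))"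
proof -
  obtain \<alpha> \<beta> \<gamma> where gram: "\<alpha> \<ge> 0" "\<alpha>\<^sup>2 = (\<Sum>i\<in>I. (x i)\<^sup>2)" "\<alpha> * \<beta> = (\<Sum>i\<in>I. x i * y i)"
      "\<beta>\<^sup>2 + \<gamma>\<^sup>2 = (\<Sum>i\<in>I. (y i)\<^sup>2)" "\<gamma> \<ge> 0"
    and law: "distr (PiM I (\<lambda>_. gauss)) borel (\<lambda>W. (\<Sum>i\<in>I. x i * W i, \<Sum>i\<in>I. y i * W i))
       = distr gauss2 borel (\<lambda>z. (\<alpha> * fst z, \<beta> * fst z + \<gamma> * snd z))"
    using distr_gaussian_linear_forms[OF assms, of x y] by blast
  note * = integral_eq_of_distr_eq[OF _ _ _ law, of "\<lambda>z. sigma_s sp sm (fst z) * sigma_s sp sm (snd z)", simplified]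
  show "integrable (PiM I (\<lambda>_. gauss))
      (\<lambda>W. sigma_s sp sm (\<Sum>i\<in>I. x i * W i) * sigma_s sp sm (\<Sum>i\<in>I. y i * W i))"
    using *(1) integrable_gauss2_sigma_s[of sp sm \<alpha> 0 \<beta> \<gamma>] by simp
  have sx: "sqrt (\<Sum>i\<in>I. (x i)\<^sup>2) = \<alpha>" and sy: "sqrt (\<Sum>i\<in>I. (y i)\<^sup>2) = sqrt (\<beta>\<^sup>2 + \<gamma>\<^sup>2)"
    using gram(1,5) by (simp_all add: gram(2,4)[symmetric])
  have corr: "\<alpha> * K1 sp sm (\<beta> / sqrt (\<beta>\<^sup>2 + \<gamma>\<^sup>2))
      = \<alpha> * K1 sp sm ((\<Sum>i\<in>I. x i * y i) / sqrt ((\<Sum>i\<in>I. (x i)\<^sup>2) * (\<Sum>i\<in>I. (y i)\<^sup>2)))"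
    using gram(1) by (cases "\<alpha> = 0") (simp_all add: real_sqrt_mult gram(2,3,4)[symmetric])
  have "(\<integral>W. sigma_s sp sm (\<Sum>i\<in>I. x i * W i) * sigma_s sp sm (\<Sum>i\<in>I. y i * W i) \<partial>PiM I (\<lambda>_. gauss))
      = sqrt (\<beta>\<^sup>2 + \<gamma>\<^sup>2) * (\<alpha> * K1 sp sm (\<beta> / sqrt (\<beta>\<^sup>2 + \<gamma>\<^sup>2)))"
    using *(2) integral_gauss2_sigma_s_triangular[OF gram(1,5), of sp sm \<beta>] by (simp add: ac_simps)
  then show "(\<integral>W. sigma_s sp sm (\<Sum>i\<in>I. x i * W i) * sigma_s sp sm (\<Sum>i\<in>I. y i * W i) \<partial>PiM I (\<lambda>_. gauss))
      = sqrt (\<Sum>i\<in>I. (x i)\<^sup>2) * sqrt (\<Sum>i\<in>I. (y i)\<^sup>2)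
        * K1 sp sm ((\<Sum>i\<in>I. x i * y i) / sqrt ((\<Sum>i\<in>I. (x i)\<^sup>2) * (\<Sum>i\<in>I. (y i)\<^sup>2)))"
    unfolding corr sx sy by (simp add: ac_simps)
qed

section \<open>The exact second moment of \<open>T1\<close>\<close>

lemma integral_gaussian_weighted_sums:
  fixes S :: "'i set" and f g :: "'i \<Rightarrow> 'a \<Rightarrow> real"
  assumes "finite S" "sigma_finite_measure M"
    and int: "\<And>r s. r \<in> S \<Longrightarrow> s \<in> S \<Longrightarrow> integrable M (\<lambda>x. f r x * g s x)"
  shows "(\<integral>z. (\<Sum>r\<in>S. snd z r * f r (fst z)) * (\<Sum>s\<in>S. snd z s * g s (fst z)) \<partial>(M \<Otimes>\<^sub>M PiM S (\<lambda>_. gauss)))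
       = (\<Sum>r\<in>S. \<integral>x. f r x * g r x \<partial>M)"
proof -
  interpret W: prob_space "PiM S (\<lambda>_. gauss)"
    by (rule prob_space_PiM) (rule prob_space_gauss)
  interpret pair_sigma_finite M "PiM S (\<lambda>_. gauss)"
    by (simp add: pair_sigma_finite_def assms(2) W.sigma_finite_measure)
  have summand: "integrable (M \<Otimes>\<^sub>M PiM S (\<lambda>_. gauss)) (\<lambda>z. f r (fst z) * g s (fst z) * (snd z r * snd z s))"
    "(\<integral>z. f r (fst z) * g s (fst z) * (snd z r * snd z s) \<partial>(M \<Otimes>\<^sub>M PiM S (\<lambda>_. gauss)))
       = (if r = s then \<integral>x. f r x * g r x \<partial>M else 0)"
    if "r \<in> S" "s \<in> S" for r s
    using integrable_mult_fst_snd[OF int[OF that] integral_gaussian_coordinates_mult(1)[OF assms(1) that]]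
      integral_mult_fst_snd[OF int[OF that] integral_gaussian_coordinates_mult(1)[OF assms(1) that]]
      integral_gaussian_coordinates_mult(2)[OF assms(1) that]
    by simp_all
  have "(\<Sum>r\<in>S. snd z r * f r (fst z)) * (\<Sum>s\<in>S. snd z s * g s (fst z))
      = (\<Sum>r\<in>S. \<Sum>s\<in>S. f r (fst z) * g s (fst z) * (snd z r * snd z s))" for z :: "'a \<times> ('i \<Rightarrow> real)"
    by (simp add: sum_product algebra_simps)
  then have "(\<integral>z. (\<Sum>r\<in>S. snd z r * f r (fst z)) * (\<Sum>s\<in>S. snd z s * g s (fst z)) \<partial>(M \<Otimes>\<^sub>M PiM S (\<lambda>_. gauss)))
      = (\<Sum>r\<in>S. \<Sum>s\<in>S. if r = s then \<integral>x. f r x * g r x \<partial>M else 0)"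
    using summand by (simp add: Bochner_Integration.integral_sum Bochner_Integration.integrable_sum)
  also have "\<dots> = (\<Sum>r\<in>S. \<integral>x. f r x * g r x \<partial>M)"
    using assms(1) by simp
  finally show ?thesis .
qed

definition preact :: "nat \<Rightarrow> (nat \<Rightarrow> nat \<Rightarrow> real) \<Rightarrow> nat \<Rightarrow> nat \<Rightarrow> (nat \<times> nat \<Rightarrow> real) \<Rightarrow> real" where
  "preact n X p j W = (\<Sum>j'<n. X p j' * W (j', j))"

definition row_inner :: "nat \<Rightarrow> (nat \<Rightarrow> nat \<Rightarrow> real) \<Rightarrow> nat \<Rightarrow> nat \<Rightarrow> real" where
  "row_inner n X p q = (\<Sum>i<n. X p i * X q i)"

definition sigma_corr :: "nat \<Rightarrow> real \<Rightarrow> real \<Rightarrow> (nat \<Rightarrow> nat \<Rightarrow> real) \<Rightarrow> nat \<Rightarrow> nat \<Rightarrow> real" where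
  "sigma_corr n sp sm X p q =
     sqrt (row_inner n X p p) * sqrt (row_inner n X q q)
     * K1 sp sm (row_inner n X p q / sqrt (row_inner n X p p * row_inner n X q q))"

text \<open>The index \<open>r = (j, i)\<close> is that of the weight \<open>Wpost (j, i)\<close> multiplying the summand.\<close>

definition T1_summand ::
  "nat \<Rightarrow> real \<Rightarrow> real \<Rightarrow> (nat \<Rightarrow> nat \<Rightarrow> real) \<Rightarrow> nat \<Rightarrow> nat \<Rightarrow> nat \<times> nat \<Rightarrow> (nat \<times> nat \<Rightarrow> real) \<Rightarrow> real"
where
  "T1_summand n sp sm X p q r W =
     X p (snd r) * sigma_s sp sm (preact n X q (fst r) W) + X q (snd r) * sigma_s sp sm (preact n X p (fst r) W)"

lemma T1_eq_sum:
  "T1 n sp sm c X p q Wpre Wpost = c * sqrt c / (real n * sqrt (real n)) *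
     (\<Sum>r\<in>{..<n} \<times> {..<n}. Wpost r * T1_summand n sp sm X p q r Wpre)"
  unfolding T1_def T1_summand_def preact_def
  by (subst sum.swap) (simp add: sum.cartesian_product case_prod_unfold)

lemma sum_column:
  fixes g :: "nat \<Rightarrow> real"
  assumes "j < n"
  shows "(\<Sum>r\<in>{..<n} \<times> {..<n}. if snd r = j then g (fst r) else 0) = (\<Sum>i<n. g i)"
proof -
  have "(\<Sum>r\<in>{..<n} \<times> {..<n}. if snd r = j then g (fst r) else 0) = (\<Sum>i<n. \<Sum>k<n. if k = j then g i else 0)"
    using sum.cartesian_product[of "\<lambda>i k. if k = j then g i else 0" "{..<n}" "{..<n}"]
    by (simp add: case_prod_unfold)
  also have "\<dots> = (\<Sum>i<n. g i)"
    using assms by simp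
  finally show ?thesis .
qed

lemma preact_eq_linear_form:
  assumes "j < n"
  shows "preact n X p j W = (\<Sum>r\<in>{..<n} \<times> {..<n}. (if snd r = j then X p (fst r) else 0) * W r)"
proof -
  have "(\<Sum>r\<in>{..<n} \<times> {..<n}. (if snd r = j then X p (fst r) else 0) * W r)
      = (\<Sum>r\<in>{..<n} \<times> {..<n}. if snd r = j then X p (fst r) * W (fst r, j) else 0)"
    by (rule sum.cong) (auto simp: prod_eq_iff)
  then show ?thesis unfolding preact_def using sum_column[OF assms, of "\<lambda>i. X p i * W (i, j)"] by simp
qed

lemma sum_column_weights_mult:
  assumes "j < n"
  shows "(\<Sum>r\<in>{..<n} \<times> {..<n}. (if snd r = j then X p (fst r) else 0) * (if snd r = j then X q (fst r) else 0))
       = row_inner n X p q"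
  unfolding row_inner_def using sum_column[OF assms, of "\<lambda>i. X p i * X q i"]
  by (simp add: if_distrib cong: if_cong)

lemma prob_space_Wlaw: "prob_space (Wlaw n)"
  unfolding Wlaw_def by (rule prob_space_PiM) (rule prob_space_gauss)

lemma integrable_sigma_preact_mult:
  assumes "j < n" "j' < n"
  shows "integrable (Wlaw n) (\<lambda>W. sigma_s sp sm (preact n X p j W) * sigma_s sp sm (preact n X q j' W))"
  using integral_sigma_s_gaussian_linear_forms(1)[of "{..<n} \<times> {..<n}" sp sm
      "\<lambda>r. if snd r = j then X p (fst r) else 0" "\<lambda>r. if snd r = j' then X q (fst r) else 0"]
  unfolding Wlaw_def preact_eq_linear_form[OF assms(1)] preact_eq_linear_form[OF assms(2)] by simp

lemma integral_sigma_preact_mult: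
  assumes "j < n"
  shows "(\<integral>W. sigma_s sp sm (preact n X p j W) * sigma_s sp sm (preact n X q j W) \<partial>Wlaw n)
       = sigma_corr n sp sm X p q"
  using integral_sigma_s_gaussian_linear_forms(2)[of "{..<n} \<times> {..<n}" sp sm
      "\<lambda>r. if snd r = j then X p (fst r) else 0" "\<lambda>r. if snd r = j then X q (fst r) else 0"]
  unfolding Wlaw_def sigma_corr_def preact_eq_linear_form[OF assms]
  by (simp add: sum_column_weights_mult[OF assms] power2_eq_square)

lemma T1_summand_mult_expand:
  "T1_summand n sp sm X a b r W * T1_summand n sp sm X d w s W =
     X a (snd r) * X d (snd s) * (sigma_s sp sm (preact n X b (fst r) W) * sigma_s sp sm (preact n X w (fst s) W))
   + X a (snd r) * X w (snd s) * (sigma_s sp sm (preact n X b (fst r) W) * sigma_s sp sm (preact n X d (fst s) W))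
   + X b (snd r) * X d (snd s) * (sigma_s sp sm (preact n X a (fst r) W) * sigma_s sp sm (preact n X w (fst s) W))
   + X b (snd r) * X w (snd s) * (sigma_s sp sm (preact n X a (fst r) W) * sigma_s sp sm (preact n X d (fst s) W))"
  unfolding T1_summand_def by (simp add: algebra_simps)

lemma integrable_T1_summand_mult:
  assumes "r \<in> {..<n} \<times> {..<n}" "s \<in> {..<n} \<times> {..<n}"
  shows "integrable (Wlaw n) (\<lambda>W. T1_summand n sp sm X a b r W * T1_summand n sp sm X d w s W)"
  using assms unfolding T1_summand_mult_expand
  by (intro Bochner_Integration.integrable_add Bochner_Integration.integrable_mult_right
      integrable_sigma_preact_mult) auto

lemma integral_T1_summand_mult:
  assumes "r \<in> {..<n} \<times> {..<n}"
  shows "(\<integral>W. T1_summand n sp sm X a b r W * T1_summand n sp sm X d w r W \<partial>Wlaw n) =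
     X a (snd r) * X d (snd r) * sigma_corr n sp sm X b w + X a (snd r) * X w (snd r) * sigma_corr n sp sm X b d
   + X b (snd r) * X d (snd r) * sigma_corr n sp sm X a w + X b (snd r) * X w (snd r) * sigma_corr n sp sm X a d"
proof -
  have "fst r < n" using assms by auto
  then show ?thesis
    unfolding T1_summand_mult_expand
    by (simp add: Bochner_Integration.integrable_add integrable_sigma_preact_mult integral_sigma_preact_mult)
qed

lemma sum_pairs_snd:
  fixes g :: "nat \<Rightarrow> real"
  shows "(\<Sum>r\<in>{..<n} \<times> {..<n}. g (snd r)) = real n * (\<Sum>i<n. g i)"
  using sum.cartesian_product[of "\<lambda>j i. g i" "{..<n}" "{..<n}"] by (simp add: case_prod_unfold)

lemma integral_T1_mult_T1:
  assumes "c \<ge> 0"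
  shows "(\<integral>W. T1 n sp sm c X a b (fst W) (snd W) * T1 n sp sm c X d w (fst W) (snd W) \<partial>(Wlaw n \<Otimes>\<^sub>M Wlaw n))
    = c ^ 3 / (real n)\<^sup>2 *
      (row_inner n X a d * sigma_corr n sp sm X b w + row_inner n X a w * sigma_corr n sp sm X b d
       + row_inner n X b d * sigma_corr n sp sm X a w + row_inner n X b w * sigma_corr n sp sm X a d)"
proof -
  define S where "S = {..<n} \<times> {..<n}"
  define k where "k = c * sqrt c / (real n * sqrt (real n))"
  have "(sqrt c)\<^sup>2 = c" "(sqrt (real n))\<^sup>2 = real n" using assms by simp_all
  then have "k\<^sup>2 = c\<^sup>2 * c / ((real n)\<^sup>2 * real n)"
    unfolding k_def by (simp add: power_mult_distrib power_divide)
  then have "k\<^sup>2 * real n = c ^ 3 / (real n)\<^sup>2"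
    by (cases "n = 0") (simp_all add: power2_eq_square power3_eq_cube)
  have "(\<integral>W. T1 n sp sm c X a b (fst W) (snd W) * T1 n sp sm c X d w (fst W) (snd W) \<partial>(Wlaw n \<Otimes>\<^sub>M Wlaw n))
      = k\<^sup>2 * (\<integral>W. (\<Sum>r\<in>S. snd W r * T1_summand n sp sm X a b r (fst W))
                    * (\<Sum>s\<in>S. snd W s * T1_summand n sp sm X d w s (fst W)) \<partial>(Wlaw n \<Otimes>\<^sub>M PiM S (\<lambda>_. gauss)))"
    unfolding T1_eq_sum k_def[symmetric] S_def[symmetric] by (simp add: Wlaw_def S_def power2_eq_square ac_simps)
  also have "\<dots> = k\<^sup>2 * (\<Sum>r\<in>S. \<integral>W. T1_summand n sp sm X a b r W * T1_summand n sp sm X d w r W \<partial>Wlaw n)"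
    using prob_space_Wlaw
    by (subst integral_gaussian_weighted_sums)
       (auto simp: S_def integrable_T1_summand_mult prob_space_imp_sigma_finite)
  also have "\<dots> = k\<^sup>2 * real n *
      (row_inner n X a d * sigma_corr n sp sm X b w + row_inner n X a w * sigma_corr n sp sm X b d
       + row_inner n X b d * sigma_corr n sp sm X a w + row_inner n X b w * sigma_corr n sp sm X a d)"
  proof -
    have h: "(\<Sum>r\<in>S. X p (snd r) * X q (snd r) * C) = real n * (row_inner n X p q * C)" for p q C
      unfolding S_def row_inner_def using sum_pairs_snd[of "\<lambda>i. X p i * X q i * C" n]
      by (simp add: sum_distrib_right)
    have "(\<Sum>r\<in>S. \<integral>W. T1_summand n sp sm X a b r W * T1_summand n sp sm X d w r W \<partial>Wlaw n)
        = (\<Sum>r\<in>S. X a (snd r) * X d (snd r) * sigma_corr n sp sm X b w)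
        + (\<Sum>r\<in>S. X a (snd r) * X w (snd r) * sigma_corr n sp sm X b d)
        + (\<Sum>r\<in>S. X b (snd r) * X d (snd r) * sigma_corr n sp sm X a w)
        + (\<Sum>r\<in>S. X b (snd r) * X w (snd r) * sigma_corr n sp sm X a d)"
      by (simp add: S_def integral_T1_summand_mult sum.distrib)
    then show ?thesis unfolding h by (simp add: algebra_simps)
  qed
  finally show ?thesis using \<open>k\<^sup>2 * real n = c ^ 3 / (real n)\<^sup>2\<close> by simp
qed

lemma Fterm_eq_sigma_corr:
  assumes "c \<ge> 0"
  shows "Fterm n sp sm c X a b d w = c ^ 3 / (real n)\<^sup>2 *
      (row_inner n X a d * sigma_corr n sp sm X b w + row_inner n X a w * sigma_corr n sp sm X b d
       + row_inner n X b d * sigma_corr n sp sm X a w + row_inner n X b w * sigma_corr n sp sm X a d)"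
proof -
  define e where "e = c / real n"
  have V: "Vmat n c X p q = e * row_inner n X p q" for p q
    unfolding Vmat_def row_inner_def e_def ..
  show ?thesis
  proof (cases "e = 0")
    case True
    have "Fterm n sp sm c X a b d w = 0" unfolding Fterm_def Let_def V True by simp
    moreover have "c ^ 3 / (real n)\<^sup>2 = 0" using True unfolding e_def by auto
    ultimately show ?thesis by (simp only: mult_zero_left)
  next
    case False
    then have "e > 0" using assms unfolding e_def by simp
    have sq: "sqrt (Vmat n c X p p * Vmat n c X q q) = e * sqrt (row_inner n X p p * row_inner n X q q)"
      for p q
    proof -
      have "Vmat n c X p p * Vmat n c X q q = e\<^sup>2 * (row_inner n X p p * row_inner n X q q)"
        by (simp add: V power2_eq_square algebra_simps)
      then show ?thesis using \<open>e > 0\<close> by (simp add: real_sqrt_mult)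
    qed
    then have "sqrt (Vmat n c X p p * Vmat n c X q q) = e * (sqrt (row_inner n X p p) * sqrt (row_inner n X q q))"
      for p q
      by (simp add: real_sqrt_mult)
    moreover have "rhomat n c X p q = row_inner n X p q / sqrt (row_inner n X p p * row_inner n X q q)" for p q
      using \<open>e > 0\<close> unfolding rhomat_def sq by (simp add: V)
    ultimately have "Fterm n sp sm c X a b d w = e * e * c *
      (row_inner n X a d * sigma_corr n sp sm X b w + row_inner n X a w * sigma_corr n sp sm X b d
       + row_inner n X b d * sigma_corr n sp sm X a w + row_inner n X b w * sigma_corr n sp sm X a d)"
      unfolding Fterm_def Let_def sigma_corr_def by (simp add: V algebra_simps)
    moreover have "e * e * c = c ^ 3 / (real n)\<^sup>2"
      unfolding e_def by (simp add: power2_eq_square power3_eq_cube)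
    ultimately show ?thesis by simp
  qed
qed

section \<open>The kernel for a small leak\<close>

definition abs_corr :: "real \<Rightarrow> real" where
  "abs_corr \<rho> = (\<integral>z. \<bar>fst z\<bar> * \<bar>\<rho> * fst z + sqrt (1 - \<rho>\<^sup>2) * snd z\<bar> \<partial>gauss2)"

lemma integrable_gauss2_corr_bound:
  fixes f :: "real \<times> real \<Rightarrow> real"
  assumes "f \<in> borel_measurable borel" "\<And>z. \<bar>f z\<bar> = \<bar>fst z\<bar> * \<bar>\<rho> * fst z + \<tau> * snd z\<bar>"
  shows "integrable gauss2 f"
proof (rule integrable_gauss2_quadratic_bound[OF assms(1)])
  fix z :: "real \<times> real"
  have "\<bar>fst z\<bar> * \<bar>\<rho> * fst z + \<tau> * snd z\<bar> \<le> (\<bar>fst z\<bar> + \<bar>snd z\<bar>) * ((\<bar>\<rho>\<bar> + \<bar>\<tau>\<bar>) * (\<bar>fst z\<bar> + \<bar>snd z\<bar>))"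
    by (intro mult_mono abs_linear_le) auto
  then show "\<bar>f z\<bar> \<le> (\<bar>\<rho>\<bar> + \<bar>\<tau>\<bar>) * (\<bar>fst z\<bar> + \<bar>snd z\<bar>)\<^sup>2"
    unfolding assms(2) by (simp add: power2_eq_square ac_simps)
qed

lemma K1_eq_abs_corr:
  "K1 sp sm \<rho> = ((sp + sm) / 2)\<^sup>2 * \<rho> + ((sp - sm) / 2)\<^sup>2 * abs_corr \<rho>"
proof -
  define A where "A = (sp + sm) / 2"
  define B where "B = (sp - sm) / 2"
  define \<tau> where "\<tau> = sqrt (1 - \<rho>\<^sup>2)"
  define v where "v z = \<rho> * fst z + \<tau> * snd z" for z :: "real \<times> real"
  have [measurable]: "v \<in> borel_measurable borel" unfolding v_def by measurable
  have int: "integrable gauss2 (\<lambda>z. fst z * v z)" "integrable gauss2 (\<lambda>z. fst z * \<bar>v z\<bar>)"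
    "integrable gauss2 (\<lambda>z. \<bar>fst z\<bar> * v z)" "integrable gauss2 (\<lambda>z. \<bar>fst z\<bar> * \<bar>v z\<bar>)"
    by (rule integrable_gauss2_corr_bound[of _ \<rho> \<tau>]; simp add: v_def abs_mult)+
  have odd: "(\<integral>z. fst z * \<bar>v z\<bar> \<partial>gauss2) = 0" "(\<integral>z. \<bar>fst z\<bar> * v z \<partial>gauss2) = 0"
    by (rule integral_gauss2_odd; simp add: v_def abs_minus_commute algebra_simps)+
  have "(\<integral>z. fst z * v z \<partial>gauss2) = \<rho>"
    using integral_gauss2_bilinear(2)[of 1 0 \<rho> \<tau>] by (simp add: v_def)
  moreover have "sigma_s sp sm (fst z) * sigma_s sp sm (v z) =
     A * A * (fst z * v z) + A * B * (fst z * \<bar>v z\<bar>) + A * B * (\<bar>fst z\<bar> * v z) + B * B * (\<bar>fst z\<bar> * \<bar>v z\<bar>)"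
    for z
    unfolding sigma_s_eq A_def B_def by (simp add: algebra_simps)
  ultimately have "K1 sp sm \<rho> = A * A * \<rho> + B * B * (\<integral>z. \<bar>fst z\<bar> * \<bar>v z\<bar> \<partial>gauss2)"
    unfolding K1_def v_def[symmetric] \<tau>_def[symmetric] using int odd by simp
  then show ?thesis unfolding abs_corr_def A_def B_def v_def \<tau>_def by (simp add: power2_eq_square)
qed

lemma abs_corr_nonneg: "abs_corr \<rho> \<ge> 0"
  unfolding abs_corr_def by simp

lemma abs_corr_le_1:
  assumes "\<bar>\<rho>\<bar> \<le> 1"
  shows "abs_corr \<rho> \<le> 1"
proof -
  define \<tau> where "\<tau> = sqrt (1 - \<rho>\<^sup>2)"
  have "\<rho>\<^sup>2 \<le> 1" using power_mono[OF assms abs_ge_zero, of 2] by simp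
  then have "\<rho> * \<rho> + \<tau> * \<tau> = 1" unfolding \<tau>_def by (simp add: power2_eq_square)
  have "\<bar>u\<bar> * \<bar>v\<bar> \<le> (u * u + v * v) / 2" for u v :: real
    using zero_le_power2[of "\<bar>u\<bar> - \<bar>v\<bar>"] by (simp add: power2_eq_square algebra_simps)
  then have "abs_corr \<rho> \<le> (\<integral>z. ((1 * fst z + 0 * snd z) * (1 * fst z + 0 * snd z)
      + (\<rho> * fst z + \<tau> * snd z) * (\<rho> * fst z + \<tau> * snd z)) / 2 \<partial>gauss2)"
    unfolding abs_corr_def \<tau>_def[symmetric]
    by (intro integral_mono integrable_gauss2_corr_bound[of _ \<rho> \<tau>]
        Bochner_Integration.integrable_divide Bochner_Integration.integrable_add integral_gauss2_bilinear(1))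
      (auto simp: abs_mult)
  also have "\<dots> = 1"
    using \<open>\<rho> * \<rho> + \<tau> * \<tau> = 1\<close> integral_gauss2_bilinear[of 1 0 1 0] integral_gauss2_bilinear[of \<rho> \<tau> \<rho> \<tau>]
    by simp
  finally show ?thesis .
qed

lemma abs_corr_1: "abs_corr 1 = 1"
  using integral_gauss2_bilinear(2)[of 1 0 1 0] unfolding abs_corr_def by (simp add: abs_mult_self_eq)

lemma c_const_eq: "c_const sp sm = 1 / (((sp + sm) / 2)\<^sup>2 + ((sp - sm) / 2)\<^sup>2)"
proof -
  have "(\<integral>g. (sigma_s sp sm g)\<^sup>2 \<partial>gauss) = (\<integral>z. sigma_s sp sm (1 * fst z + 0 * snd z) * sigma_s sp sm (1 * fst z + 0 * snd z) \<partial>gauss2)"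
    using gauss2.integral_fst'[OF integrable_gauss2_sigma_s[of sp sm 1 0 1 0]] by (simp add: power2_eq_square)
  also have "\<dots> = K1 sp sm 1" unfolding K1_def by simp
  finally show ?thesis unfolding c_const_def K1_eq_abs_corr abs_corr_1 by simp
qed

lemma c_const_nonneg: "c_const sp sm \<ge> 0"
  unfolding c_const_eq by simp

lemma c_const_K1_approx:
  fixes sp sm :: real
  defines "A \<equiv> (sp + sm) / 2" and "B \<equiv> (sp - sm) / 2"
  assumes "A\<^sup>2 + B\<^sup>2 > 0" "\<bar>\<rho>\<bar> \<le> 1"
  shows "\<bar>c_const sp sm * K1 sp sm \<rho> - \<rho>\<bar> \<le> 2 * (B\<^sup>2 / (A\<^sup>2 + B\<^sup>2))"
proof -
  define Q where "Q = A\<^sup>2 + B\<^sup>2"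
  have "Q > 0" using assms(3) unfolding Q_def .
  have "c_const sp sm * K1 sp sm \<rho> - \<rho> = 1 / Q * (A\<^sup>2 * \<rho> + B\<^sup>2 * abs_corr \<rho>) - \<rho>"
    unfolding c_const_eq K1_eq_abs_corr Q_def A_def B_def ..
  also have "\<dots> = (A\<^sup>2 * \<rho> + B\<^sup>2 * abs_corr \<rho> - Q * \<rho>) / Q"
    using \<open>Q > 0\<close> by (simp add: field_simps)
  also have "\<dots> = B\<^sup>2 / Q * (abs_corr \<rho> - \<rho>)"
    unfolding Q_def by (simp add: algebra_simps)
  finally have "\<bar>c_const sp sm * K1 sp sm \<rho> - \<rho>\<bar> = B\<^sup>2 / Q * \<bar>abs_corr \<rho> - \<rho>\<bar>"
    using \<open>Q > 0\<close> by (simp add: abs_mult)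
  also have "\<dots> \<le> B\<^sup>2 / Q * 2"
    using abs_corr_nonneg[of \<rho>] abs_corr_le_1[OF assms(4)] assms(4) \<open>Q > 0\<close>
    by (intro mult_left_mono) auto
  finally show ?thesis unfolding Q_def by (simp add: mult.commute)
qed

lemma s_par_ratio_le:
  fixes cp cm :: real and n :: nat
  defines "A \<equiv> (s_par n cp + s_par n cm) / 2" and "B \<equiv> (s_par n cp - s_par n cm) / 2"
  assumes "n > 0"
  shows "B\<^sup>2 / (A\<^sup>2 + B\<^sup>2) \<le> ((cp - cm)\<^sup>2 + (\<bar>cp\<bar> + \<bar>cm\<bar> + 1)\<^sup>2) / real n"
proof -
  define K where "K = (cp - cm)\<^sup>2 + (\<bar>cp\<bar> + \<bar>cm\<bar> + 1)\<^sup>2"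
  define r where "r = sqrt (real n)"
  have "r > 0" unfolding r_def using assms by simp
  then have A: "A = 1 + (cp + cm) / (2 * r)" and B: "B = (cp - cm) / (2 * r)"
    unfolding A_def B_def s_par_def r_def[symmetric] by (simp_all add: field_simps)
  show ?thesis
  proof (cases "r \<ge> \<bar>cp\<bar> + \<bar>cm\<bar> + 1")
    case True
    \<comment> \<open>for large \<open>n\<close> the slopes are close to 1, so \<open>A \<ge> 1/2\<close>\<close>
    have "\<bar>cp + cm\<bar> \<le> r" using True abs_triangle_ineq[of cp cm] by linarith
    then have "\<bar>(cp + cm) / (2 * r)\<bar> \<le> 1 / 2"
      using \<open>r > 0\<close> by (simp add: abs_divide field_simps)
    then have "A \<ge> 1 / 2" unfolding A by linarith
    then have "1 / 4 \<le> A\<^sup>2"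
      using power_mono[of "1 / 2" A 2] by (simp add: power_divide)
    then have "1 / 4 \<le> A\<^sup>2 + B\<^sup>2"
      using zero_le_power2[of B] by linarith
    then have "B\<^sup>2 / (A\<^sup>2 + B\<^sup>2) \<le> B\<^sup>2 / (1 / 4)"
      by (intro divide_left_mono) auto
    also have "\<dots> = (cp - cm)\<^sup>2 / real n"
      unfolding B r_def using assms by (simp add: power_divide power_mult_distrib)
    also have "\<dots> \<le> K / real n" unfolding K_def by (simp add: divide_right_mono)
    finally show ?thesis unfolding K_def .
  next
    case False
    then have "r\<^sup>2 < (\<bar>cp\<bar> + \<bar>cm\<bar> + 1)\<^sup>2"
      using \<open>r > 0\<close> by (intro power_strict_mono) auto
    then have "real n < (\<bar>cp\<bar> + \<bar>cm\<bar> + 1)\<^sup>2"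
      unfolding r_def by simp
    then have "real n \<le> K"
      unfolding K_def using zero_le_power2[of "cp - cm"] by linarith
    then have "1 \<le> K / real n" using assms by (simp add: le_divide_eq)
    moreover have "B\<^sup>2 / (A\<^sup>2 + B\<^sup>2) \<le> 1"
      by (cases "A\<^sup>2 + B\<^sup>2 = 0") (simp_all add: divide_le_eq_1 add_pos_nonneg less_le)
    ultimately show ?thesis unfolding K_def by linarith
  qed
qed

lemma approx_correlation_term:
  fixes f :: "real \<Rightarrow> real"
  assumes f: "\<And>\<rho>. \<bar>\<rho>\<bar> \<le> 1 \<Longrightarrow> \<bar>f \<rho> - \<rho>\<bar> \<le> E"
    and "\<bar>u\<bar> \<le> B" "0 \<le> s" "s \<le> B" "\<bar>v\<bar> \<le> s"
  shows "\<bar>u * s * f (v / s) - u * v\<bar> \<le> B * B * E"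
proof (cases "s = 0")
  case True
  have "0 \<le> E" using f[of 0] by simp
  then show ?thesis using True assms(5) by simp
next
  case False
  then have "\<bar>v / s\<bar> \<le> 1" using assms(3,5) by (simp add: abs_divide divide_le_eq_1)
  have "u * s * f (v / s) - u * v = u * s * (f (v / s) - v / s)"
    using False by (simp add: algebra_simps)
  also have "\<bar>\<dots>\<bar> \<le> B * B * E"
    unfolding abs_mult using assms(2-4) f[OF \<open>\<bar>v / s\<bar> \<le> 1\<close>]
    by (intro mult_mono) (auto intro: mult_mono order_trans[OF abs_ge_zero])
  finally show ?thesis .
qed

lemma Vmat_self_nonneg: "c \<ge> 0 \<Longrightarrow> Vmat n c X p p \<ge> 0"
  unfolding Vmat_def by (simp add: sum_nonneg)

lemma abs_Vmat_le_sqrt: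
  assumes "c \<ge> 0"
  shows "\<bar>Vmat n c X p q\<bar> \<le> sqrt (Vmat n c X p p * Vmat n c X q q)"
proof -
  have "(Vmat n c X p q)\<^sup>2 = (c / real n)\<^sup>2 * (\<Sum>i<n. X p i * X q i)\<^sup>2"
    unfolding Vmat_def by (simp only: power_mult_distrib)
  also have "\<dots> \<le> (c / real n)\<^sup>2 * ((\<Sum>i<n. (X p i)\<^sup>2) * (\<Sum>i<n. (X q i)\<^sup>2))"
    by (rule mult_left_mono[OF Cauchy_Schwarz_ineq_sum]) simp
  also have "\<dots> = Vmat n c X p p * Vmat n c X q q"
    unfolding Vmat_def by (simp add: power2_eq_square algebra_simps)
  finally show ?thesis using real_le_rsqrt by simp
qed

lemma sqrt_Vmat_le:
  assumes "c \<ge> 0" "Vmat n c X p p \<le> B" "Vmat n c X q q \<le> B"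
  shows "sqrt (Vmat n c X p p * Vmat n c X q q) \<le> B"
proof -
  have "0 \<le> Vmat n c X p p" "0 \<le> Vmat n c X q q" using Vmat_self_nonneg[OF assms(1)] by auto
  then have "Vmat n c X p p * Vmat n c X q q \<le> B * B"
    using assms by (intro mult_mono) auto
  then have "sqrt (Vmat n c X p p * Vmat n c X q q) \<le> sqrt (B * B)"
    by (rule real_sqrt_le_mono)
  also have "\<dots> = B" using assms(2) \<open>0 \<le> Vmat n c X p p\<close> by simp
  finally show ?thesis .
qed

lemma Fterm_approx:
  fixes cp cm :: real and n :: nat and X :: "nat \<Rightarrow> nat \<Rightarrow> real"
  defines "sp \<equiv> s_par n cp" and "sm \<equiv> s_par n cm"
  defines "c \<equiv> c_const sp sm"
  defines "V \<equiv> Vmat n c X"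
  assumes "n > 0" and bounds: "V a a \<le> B" "V b b \<le> B" "V d d \<le> B" "V w w \<le> B"
  shows "\<bar>Fterm n sp sm c X a b d w - (2 * V a d * V b w + 2 * V a w * V b d)\<bar>
     \<le> 8 * B\<^sup>2 * ((cp - cm)\<^sup>2 + (\<bar>cp\<bar> + \<bar>cm\<bar> + 1)\<^sup>2) / real n"
proof -
  define K where "K = (cp - cm)\<^sup>2 + (\<bar>cp\<bar> + \<bar>cm\<bar> + 1)\<^sup>2"
  define Q where "Q = ((sp + sm) / 2)\<^sup>2 + ((sp - sm) / 2)\<^sup>2"
  have "c \<ge> 0" unfolding c_def by (rule c_const_nonneg)
  have "0 \<le> 8 * B\<^sup>2 * K / real n" unfolding K_def by simp
  show ?thesis
  proof (cases "Q = 0")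
    case True
    \<comment> \<open>then \<open>c = 1 / 0 = 0\<close>, so every \<open>V\<close> vanishes\<close>
    then have "c = 0" unfolding c_def c_const_eq Q_def by simp
    then have "V = (\<lambda>p q. 0)" unfolding V_def Vmat_def by (simp add: fun_eq_iff)
    then show ?thesis
      using \<open>0 \<le> 8 * B\<^sup>2 * K / real n\<close> unfolding Fterm_def Let_def V_def[symmetric] K_def by simp
  next
    case False
    then have "Q > 0" unfolding Q_def by (simp add: add_nonneg_nonneg less_le)
    define E where "E = 2 * (K / real n)"
    have approx: "\<bar>c * K1 sp sm \<rho> - \<rho>\<bar> \<le> E" if "\<bar>\<rho>\<bar> \<le> 1" for \<rho>
      using c_const_K1_approx[of sp sm \<rho>] s_par_ratio_le[OF \<open>n > 0\<close>, of cp cm] \<open>Q > 0\<close> that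
      unfolding c_def E_def K_def Q_def sp_def sm_def by linarith
    define T where "T p q r s = V p q * sqrt (V r r * V s s) * c * K1 sp sm (rhomat n c X r s) - V p q * V r s"
      for p q r s
    have T: "\<bar>T p q r s\<bar> \<le> B * B * E"
      if "V p p \<le> B" "V q q \<le> B" "V r r \<le> B" "V s s \<le> B" for p q r s
    proof -
      have "\<bar>V p q\<bar> \<le> B"
        using order_trans[OF abs_Vmat_le_sqrt sqrt_Vmat_le] \<open>c \<ge> 0\<close> that(1,2) unfolding V_def by blast
      moreover have "0 \<le> sqrt (V r r * V s s)"
        using Vmat_self_nonneg[OF \<open>c \<ge> 0\<close>] unfolding V_def by simp
      moreover have "sqrt (V r r * V s s) \<le> B"
        using sqrt_Vmat_le[OF \<open>c \<ge> 0\<close>] that(3,4) unfolding V_def by blast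
      moreover have "\<bar>V r s\<bar> \<le> sqrt (V r r * V s s)"
        using abs_Vmat_le_sqrt[OF \<open>c \<ge> 0\<close>] unfolding V_def by blast
      ultimately have "\<bar>V p q * sqrt (V r r * V s s) * (\<lambda>\<rho>. c * K1 sp sm \<rho>) (V r s / sqrt (V r r * V s s))
          - V p q * V r s\<bar> \<le> B * B * E"
        by (intro approx_correlation_term approx)
      then show ?thesis unfolding T_def rhomat_def V_def by (simp add: mult.assoc)
    qed
    have "Fterm n sp sm c X a b d w - (2 * V a d * V b w + 2 * V a w * V b d)
        = T a d b w + T a w b d + T b d a w + T b w a d"
      unfolding Fterm_def Let_def T_def V_def by (simp add: algebra_simps)
    also have "\<bar>\<dots>\<bar> \<le> 4 * (B * B * E)"
      using T[OF bounds(1,3,2,4)] T[OF bounds(1,4,2,3)] T[OF bounds(2,3,1,4)] T[OF bounds(2,4,1,3)]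
      by linarith
    also have "\<dots> = 8 * B\<^sup>2 * K / real n" unfolding E_def by (simp add: power2_eq_square)
    finally show ?thesis unfolding K_def .
  qed
qed

theorem lemmaB1:
  fixes cp cm :: real
  shows "(\<forall>n>0. \<forall>(X :: nat \<Rightarrow> nat \<Rightarrow> real) a b d w.
            let sp = s_par n cp; sm = s_par n cm; c = c_const sp sm in
            (\<integral>W. T1 n sp sm c X a b (fst W) (snd W) * T1 n sp sm c X d w (fst W) (snd W)
                 \<partial>(pair_measure (Wlaw n) (Wlaw n)))
            = Fterm n sp sm c X a b d w)
       \<and> (\<forall>B::real. \<exists>C::real. \<forall>n>0. \<forall>(X :: nat \<Rightarrow> nat \<Rightarrow> real) a b d w.
            let sp = s_par n cp; sm = s_par n cm; c = c_const sp sm; V = Vmat n c X in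
            (V a a \<le> B \<and> V b b \<le> B \<and> V d d \<le> B \<and> V w w \<le> B) \<longrightarrow>
            \<bar>Fterm n sp sm c X a b d w - (2 * V a d * V b w + 2 * V a w * V b d)\<bar> \<le> C / real n)"
  unfolding Let_def
  apply (intro conjI allI impI)
  subgoal by (simp add: integral_T1_mult_T1 Fterm_eq_sigma_corr c_const_nonneg)
  subgoal for B
    by (intro exI[of _ "8 * B\<^sup>2 * ((cp - cm)\<^sup>2 + (\<bar>cp\<bar> + \<bar>cm\<bar> + 1)\<^sup>2)"] allI impI Fterm_approx) auto
  done

end
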